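(* Let $X_0=0$ and $X_n=\sum_{j=1}^{X_{n-1}}\xi_{n,j}+\varepsilon_n$ for $n\ge1$, where $\{\xi_{n,j},\varepsilon_n\}$ are independent nonnegative integer-valued random variables with $\xi_{n,j}$, $j\in\mathbb N$, identically distributed for each $n$. Let $G_n(x)=\mathbb E x^{\xi_{n,1}}$, $H_n(x)=\mathbb E x^{\varepsilon_n}$, $\rho_n=G_n'(1)$, $G_n''(1)<\infty$, and $m_{n,k}=H_n^{(k)}(1)$ (the $k$-th factorial moment of $\varepsilon_n$, assumed finite for $k\le J$). Let $J\ge 2$ be an integer and assume (i) $\rho_n<1$, $\lim_{n}\rho_n=1$, $\sum_{n=1}^\infty(1-\rho_n)=\infty$, and $\lim_n G_n''(1)/(1-\rho_n)=0$; (ii) $\lim_{n\to\infty}\frac{m_{n,j}}{j(1-\rho_n)}=\lambda_j$ for $j=1,\dots,J$, with $\lambda_J=0$. Then $X_n$ converges in distribution to the compound Poisson distribution $\mathrm{CP}(\mu)$, where $\mu$ is the finite measure on $\{1,\dots,J-1\}$ given by $$\mu\{j\}=\frac{1}{j!}\sum_{i=0}^{J-j-1}\frac{(-1)^i}{i!}\lambda_{j+i},\qquad j=1,\dots,J-1.$$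
   Context: For a finite measure $\mu$ on $\{1,2,\dots\}$, the compound Poisson distribution $\mathrm{CP}(\mu)$ is the distribution on $\{0,1,2,\dots\}$ with generating function $x\mapsto\exp\{\sum_{j\ge1}\mu\{j\}(x^j-1)\}$, $x\in[0,1]$. *)

theory Defs
  imports "HOL-Probability.Probability"
begin

text \<open>k-th factorial moment E[Y(Y-1)...(Y-k+1)] of a nat-valued distribution
  (equals the k-th derivative of the generating function at 1).\<close>
definition fmom :: "nat pmf \<Rightarrow> nat \<Rightarrow> real" where
  "fmom p k = measure_pmf.expectation p (\<lambda>i. \<Prod>l<k. real i - real l)"

definition fmom_finite :: "nat pmf \<Rightarrow> nat \<Rightarrow> bool" where
  "fmom_finite p k \<longleftrightarrow> integrable (measure_pmf p) (\<lambda>i. \<Prod>l<k. real i - real l)"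

primrec iid_sum :: "nat pmf \<Rightarrow> nat \<Rightarrow> nat pmf" where
  "iid_sum p 0 = return_pmf 0"
| "iid_sum p (Suc k) = bind_pmf (iid_sum p k) (\<lambda>s. map_pmf (\<lambda>x. s + x) p)"

primrec X_law :: "(nat \<Rightarrow> nat pmf) \<Rightarrow> (nat \<Rightarrow> nat pmf) \<Rightarrow> nat \<Rightarrow> nat pmf" where
  "X_law xi eps 0 = return_pmf 0"
| "X_law xi eps (Suc n) =
     bind_pmf (X_law xi eps n) (\<lambda>k. bind_pmf (iid_sum (xi (Suc n)) k)
        (\<lambda>s. map_pmf (\<lambda>e. s + e) (eps (Suc n))))"

text \<open>q is the compound Poisson distribution CP(mu), mu supported on {1..N}:
  its generating function is exp(sum_j mu{j}(x^j - 1)) on [0,1].\<close>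
definition is_CP :: "nat pmf \<Rightarrow> (nat \<Rightarrow> real) \<Rightarrow> nat \<Rightarrow> bool" where
  "is_CP q \<mu> N \<longleftrightarrow> (\<forall>x\<in>{0..1::real}.
      (\<Sum>k. pmf q k * x ^ k) = exp (\<Sum>j=1..N. \<mu> j * (x ^ j - 1)))"

end

theory Submission
  imports Defs
begin

(* Write G_n, H_n for the pgfs of xi_n and eps_n and rho_n = G_n'(1).  The pgf
   of X_n is prod_{k=1..n} H_k(F_{k,n}(x)) with F_{k,n} = G_{k+1} o ... o G_n
   (comp_range).  The first and second order Taylor bounds of G_i show that
   gap x k n = 1 - F_{k,n}(x) equals rho_prod k n * (1 - x) up to a defect, where
   rho_prod k n = prod_{k<i<=n} rho_i.  The alternating (Bonferroni) expansion of
   H_k in factorial moments, combined with a Toeplitz lemma for the weights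
   (1 - rho_k) rho_prod k n, then gives
     sum_k (H_k(1 - gap x k n) - 1) --> L(x) = sum_{1<=j<J} (-1)^j lam_j (1-x)^j / j!
   and hence pgf X_n --> exp L(x).  A binomial identity rewrites L(x) as
   sum_j mu_j (x^j - 1), an alternating-sum inequality for binomial coefficients
   shows mu_j >= 0, and exp L is the pgf of a sum of independent scaled Poisson
   variables, i.e. of CP(mu).  Finally, pointwise convergence of pgfs on [0,1]
   implies convergence of the point masses and hence weak convergence. *)

(* Keep 1::nat as a numeral, so that moments such as fmom p 1 stay readable. *)
declare One_nat_def [simp del]

section \<open>Probability generating functions\<close>

definition pgf :: "nat pmf \<Rightarrow> real \<Rightarrow> real" where
  "pgf p x = measure_pmf.expectation p (\<lambda>k. x ^ k)"

lemma integrable_bounded_pmf: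
  fixes f :: "'a \<Rightarrow> real"
  assumes "\<And>k. \<bar>f k\<bar> \<le> B"
  shows "integrable (measure_pmf p) f"
  by (rule measure_pmf.integrable_const_bound[where B=B]) (auto simp: assms)

lemma expectation_bind_pmf:
  fixes f :: "'b \<Rightarrow> real"
  assumes "\<And>y. \<bar>f y\<bar> \<le> B"
  shows "measure_pmf.expectation (bind_pmf M N) f =
         measure_pmf.expectation M (\<lambda>a. measure_pmf.expectation (N a) f)"
  unfolding measure_pmf_bind
  by (rule integral_bind[where B=B and B'=1 and K="count_space UNIV"])
     (auto simp: assms measure_pmf_in_subprob_algebra intro: prob_space_imp_subprob_space)

lemma pgf_01:
  assumes "0 \<le> x" "x \<le> 1"
  shows "pgf p x \<in> {0..1}"
proof -
  have "pgf p x \<le> measure_pmf.expectation p (\<lambda>k. 1::real)"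
    unfolding pgf_def using assms
    by (intro integral_mono integrable_bounded_pmf[where B=1]) (auto simp: power_le_one)
  moreover have "0 \<le> pgf p x"
    unfolding pgf_def using assms by (intro integral_nonneg_AE) auto
  ultimately show ?thesis by simp
qed

lemma pgf_bind:
  assumes "0 \<le> x" "x \<le> 1"
  shows "pgf (bind_pmf M N) x = measure_pmf.expectation M (\<lambda>a. pgf (N a) x)"
  unfolding pgf_def
  by (rule expectation_bind_pmf[where B=1]) (use assms in \<open>auto simp: power_le_one\<close>)

lemma pgf_shift: "pgf (map_pmf (\<lambda>e. s + e) p) x = x ^ s * pgf p x"
  unfolding pgf_def by (simp add: power_add)

lemma pgf_return [simp]: "pgf (return_pmf k) x = x ^ k"
  unfolding pgf_def by simp

lemma pgf_bind_shift:
  assumes "0 \<le> x" "x \<le> 1"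
  shows "pgf (bind_pmf M (\<lambda>s. map_pmf (\<lambda>e. s + e) p)) x = pgf M x * pgf p x"
  using assms by (simp add: pgf_bind pgf_shift) (simp add: pgf_def)

lemma pgf_iid_sum:
  assumes "0 \<le> x" "x \<le> 1"
  shows "pgf (iid_sum p k) x = pgf p x ^ k"
  by (induction k) (simp_all add: pgf_bind_shift[OF assms])

lemma pgf_X_law_Suc:
  assumes "0 \<le> x" "x \<le> 1"
  shows "pgf (X_law xi eps (Suc n)) x =
     pgf (X_law xi eps n) (pgf (xi (Suc n)) x) * pgf (eps (Suc n)) x"
proof -
  have inner: "pgf (bind_pmf (iid_sum (xi (Suc n)) k) (\<lambda>s. map_pmf (\<lambda>e. s + e) (eps (Suc n)))) x
      = pgf (xi (Suc n)) x ^ k * pgf (eps (Suc n)) x" for k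
    by (simp only: pgf_bind_shift[OF assms] pgf_iid_sum[OF assms])
  have "pgf (X_law xi eps (Suc n)) x = measure_pmf.expectation (X_law xi eps n)
      (\<lambda>k. pgf (xi (Suc n)) x ^ k * pgf (eps (Suc n)) x)"
    by (subst X_law.simps, subst pgf_bind[OF assms]) (simp only: inner)
  then show ?thesis unfolding pgf_def by simp
qed

(* comp_range G k n x = G_{k+1} (G_{k+2} ( ... (G_n x))), the identity when n <= k. *)
primrec comp_range :: "(nat \<Rightarrow> real \<Rightarrow> real) \<Rightarrow> nat \<Rightarrow> nat \<Rightarrow> real \<Rightarrow> real" where
  "comp_range G k 0 x = x"
| "comp_range G k (Suc n) x = (if Suc n \<le> k then x else comp_range G k n (G (Suc n) x))"

lemma comp_range_trivial: "n \<le> k \<Longrightarrow> comp_range G k n x = x"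
  by (induction n arbitrary: x) auto

lemma comp_range_pgf_01:
  "x \<in> {0..1} \<Longrightarrow> comp_range (\<lambda>n. pgf (xi n)) k n x \<in> {0..1}"
proof (induction n arbitrary: x)
  case (Suc n)
  then show ?case using pgf_01[of x "xi (Suc n)"] by auto
qed simp

lemma pgf_X_law:
  assumes "x \<in> {0..1}"
  shows "pgf (X_law xi eps n) x =
    (\<Prod>k=1..n. pgf (eps k) (comp_range (\<lambda>n. pgf (xi n)) k n x))"
  using assms
proof (induction n arbitrary: x)
  case 0 then show ?case by simp
next
  case (Suc n)
  let ?F = "comp_range (\<lambda>n. pgf (xi n))"
  have y: "pgf (xi (Suc n)) x \<in> {0..1}" using Suc.prems pgf_01 by auto
  have "pgf (X_law xi eps (Suc n)) x =
      pgf (X_law xi eps n) (pgf (xi (Suc n)) x) * pgf (eps (Suc n)) x"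
    using Suc.prems pgf_X_law_Suc by auto
  also have "\<dots> = (\<Prod>k=1..n. pgf (eps k) (?F k (Suc n) x)) * pgf (eps (Suc n)) (?F (Suc n) (Suc n) x)"
    using Suc.IH[OF y] by (simp add: comp_range_trivial)
  also have "\<dots> = (\<Prod>k=1..Suc n. pgf (eps k) (?F k (Suc n) x))"
    by simp
  finally show ?case .
qed

section \<open>Factorial moments and the alternating (Bonferroni) expansion of a pgf at 1\<close>

definition binom_tail :: "nat \<Rightarrow> nat \<Rightarrow> real \<Rightarrow> real" where
  "binom_tail J Y t = (1 - t) ^ Y - (\<Sum>j<J. real (Y choose j) * (- t) ^ j)"

lemma binom_tail_Suc_Suc:
  "binom_tail (Suc J) (Suc Y) t = binom_tail (Suc J) Y t - t * binom_tail J Y t"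
proof -
  have "(\<Sum>j<Suc J. real (Suc Y choose j) * (- t) ^ j)
      = real (Suc Y choose 0) + (\<Sum>j<J. real (Suc Y choose Suc j) * (- t) ^ Suc j)"
    by (subst sum.lessThan_Suc_shift) simp
  also have "\<dots> = 1 + (\<Sum>j<J. real (Y choose Suc j) * (- t) ^ Suc j)
          + (\<Sum>j<J. real (Y choose j) * (- t) ^ Suc j)"
    by (simp only: binomial_Suc_Suc of_nat_add distrib_right sum.distrib add_ac binomial_0_Suc)
       simp
  also have "1 + (\<Sum>j<J. real (Y choose Suc j) * (- t) ^ Suc j)
      = (\<Sum>j<Suc J. real (Y choose j) * (- t) ^ j)"
    by (subst sum.lessThan_Suc_shift) simp
  also have "(\<Sum>j<J. real (Y choose j) * (- t) ^ Suc j)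
      = - t * (\<Sum>j<J. real (Y choose j) * (- t) ^ j)"
    by (simp add: sum_distrib_left algebra_simps)
  finally show ?thesis unfolding binom_tail_def by (simp add: algebra_simps)
qed

lemma binom_tail_bound:
  assumes "0 \<le> t" "t \<le> 1"
  shows "0 \<le> (-1) ^ J * binom_tail J Y t \<and>
         (-1) ^ J * binom_tail J Y t \<le> real (Y choose J) * t ^ J"
proof (induction Y arbitrary: J)
  case 0
  have "(\<Sum>j<J. real (0 choose j) * (- t) ^ j) = (if J = 0 then 0 else 1)"
    by (cases J) (simp_all only: sum.lessThan_Suc_shift, auto)
  then show ?case by (cases J) (simp_all add: binom_tail_def)
next
  case (Suc Y)
  show ?case
  proof (cases J)
    case 0
    have "(1 - t) ^ Suc Y \<le> 1" using assms by (intro power_le_one) auto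
    then show ?thesis using assms 0 by (simp add: binom_tail_def)
  next
    case (Suc J')
    have IH_J: "0 \<le> (-1) ^ J * binom_tail J Y t"
        "(-1) ^ J * binom_tail J Y t \<le> real (Y choose J) * t ^ J"
      using Suc.IH[of J] by auto
    have IH_J': "0 \<le> (-1) ^ J' * binom_tail J' Y t"
        "(-1) ^ J' * binom_tail J' Y t \<le> real (Y choose J') * t ^ J'"
      using Suc.IH[of J'] by auto
    have step: "(-1) ^ J * binom_tail J (Suc Y) t
        = (-1) ^ J * binom_tail J Y t + t * ((-1) ^ J' * binom_tail J' Y t)"
      using Suc by (simp add: binom_tail_Suc_Suc algebra_simps)
    have "t * ((-1) ^ J' * binom_tail J' Y t) \<le> t * (real (Y choose J') * t ^ J')"
      using IH_J' assms by (intro mult_left_mono) auto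
    then have "(-1) ^ J * binom_tail J (Suc Y) t
        \<le> real (Y choose J) * t ^ J + real (Y choose J') * t ^ J"
      using step IH_J Suc by (simp add: algebra_simps)
    also have "\<dots> = real (Suc Y choose J) * t ^ J" using Suc by (simp add: algebra_simps)
    finally show ?thesis using step IH_J IH_J' assms by simp
  qed
qed

lemma falling_prod_choose: "(\<Prod>l<k. real i - real l) = fact k * real (i choose k)"
  by (simp add: binomial_gbinomial gbinomial_prod_rev atLeast0LessThan)

lemma fmom_finite_choose:
  "fmom_finite p k \<longleftrightarrow> integrable (measure_pmf p) (\<lambda>i. real (i choose k))"
  unfolding fmom_finite_def falling_prod_choose
  by (subst integrable_mult_left_iff) auto

lemma expectation_choose:
  "measure_pmf.expectation p (\<lambda>i. real (i choose k)) = fmom p k / fact k"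
  unfolding fmom_def falling_prod_choose by simp

lemma fmom_0 [simp]: "fmom p 0 = 1"
  unfolding fmom_def by simp

lemma fmom_nonneg: "0 \<le> fmom p k"
  unfolding fmom_def falling_prod_choose by (auto intro!: integral_nonneg_AE)

lemma fmom_finite_choose_upto:
  assumes "\<forall>k\<in>{1..J}. fmom_finite p k" "k \<le> J"
  shows "integrable (measure_pmf p) (\<lambda>i. real (i choose k))"
  using assms by (cases k) (auto simp: fmom_finite_choose)

(* Taking expectations in the Bonferroni inequalities: the pgf at 1 - t is
   approximated by its factorial-moment expansion to order J, with an error of
   sign (-1)^J bounded by the next term. *)
lemma pgf_taylor_bound:
  fixes p :: "nat pmf"
  assumes fin: "\<forall>k\<in>{1..J}. fmom_finite p k" and t: "0 \<le> t" "t \<le> 1"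
  defines "E \<equiv> pgf p (1 - t) - (\<Sum>j<J. fmom p j / fact j * (- t) ^ j)"
  shows "0 \<le> (-1) ^ J * E \<and> (-1) ^ J * E \<le> fmom p J / fact J * t ^ J"
proof -
  note ic = fmom_finite_choose_upto[OF fin]
  have ip: "integrable (measure_pmf p) (\<lambda>i. (1 - t) ^ i)"
    using t by (intro integrable_bounded_pmf[where B=1]) (auto simp: power_le_one)
  have isum: "integrable (measure_pmf p) (\<lambda>i. \<Sum>j<J. real (i choose j) * (- t) ^ j)"
    using ic by (intro Bochner_Integration.integrable_sum integrable_mult_left) auto
  have iR: "integrable (measure_pmf p) (\<lambda>i. binom_tail J i t)"
    unfolding binom_tail_def using ip isum by auto
  have E: "E = measure_pmf.expectation p (\<lambda>i. binom_tail J i t)"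
    unfolding binom_tail_def pgf_def E_def using ip isum ic
    by (simp add: Bochner_Integration.integral_sum expectation_choose)
  have "0 \<le> measure_pmf.expectation p (\<lambda>i. (-1) ^ J * binom_tail J i t)"
    using binom_tail_bound[OF t] by (intro integral_nonneg_AE) auto
  moreover have "measure_pmf.expectation p (\<lambda>i. (-1) ^ J * binom_tail J i t)
      \<le> measure_pmf.expectation p (\<lambda>i. real (i choose J) * t ^ J)"
    using binom_tail_bound[OF t] iR ic by (intro integral_mono) auto
  ultimately show ?thesis unfolding E by (simp add: expectation_choose)
qed

lemma pgf_first_order_bound:
  assumes "fmom_finite p 1" "0 \<le> t" "t \<le> 1"
  shows "1 - pgf p (1 - t) \<le> fmom p 1 * t"
  using pgf_taylor_bound[of 1 p t] assms by (simp add: One_nat_def)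

lemma pgf_second_order_bound:
  assumes fin: "fmom_finite p 1" "fmom_finite p 2" and t: "0 \<le> t" "t \<le> 1"
  shows "pgf p (1 - t) \<le> 1 - fmom p 1 * t + fmom p 2 / 2 * t ^ 2"
proof -
  have "\<forall>k\<in>{1..2}. fmom_finite p k"
    using fin by (auto simp: atLeastAtMost_iff le_Suc_eq numeral_2_eq_2 One_nat_def)
  moreover have "(\<Sum>j<2. fmom p j / fact j * (- t) ^ j) = 1 - fmom p 1 * t"
    by (simp add: numeral_2_eq_2 One_nat_def)
  ultimately show ?thesis using pgf_taylor_bound[of 2 p t] t by auto
qed

section \<open>A Toeplitz lemma for the weights built from the offspring means\<close>

lemma toeplitz_null:
  fixes w :: "nat \<Rightarrow> nat \<Rightarrow> real" and c :: "nat \<Rightarrow> real"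
  assumes w_nn: "\<And>n k. 0 \<le> w n k" and w_sum: "\<And>n. (\<Sum>k=1..n. w n k) \<le> 1"
    and w_lim: "\<And>k. (\<lambda>n. w n k) \<longlonglongrightarrow> 0" and c: "c \<longlonglongrightarrow> 0"
  shows "(\<lambda>n. \<Sum>k=1..n. w n k * c k) \<longlonglongrightarrow> 0"
proof (rule LIMSEQ_I)
  fix r :: real assume r: "0 < r"
  obtain M where M: "\<And>k. k \<ge> M \<Longrightarrow> \<bar>c k\<bar> < r / 2"
    using LIMSEQ_D[OF c, of "r/2"] r by auto
  have head: "(\<lambda>n. \<Sum>k\<in>{1..<M}. w n k * \<bar>c k\<bar>) \<longlonglongrightarrow> 0"
    using w_lim by (auto intro!: tendsto_null_sum tendsto_mult_left_zero)
  obtain N where N: "\<And>n. n \<ge> N \<Longrightarrow> \<bar>\<Sum>k\<in>{1..<M}. w n k * \<bar>c k\<bar>\<bar> < r / 2"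
    using LIMSEQ_D[OF head, of "r/2"] r by auto
  show "\<exists>no. \<forall>n\<ge>no. norm ((\<Sum>k = 1..n. w n k * c k) - 0) < r"
  proof (intro exI allI impI)
    fix n assume n: "N \<le> n"
    let ?A = "{1..n} \<inter> {..<M}" and ?B = "{1..n} - {..<M}"
    have "\<bar>\<Sum>k=1..n. w n k * c k\<bar> \<le> (\<Sum>k=1..n. w n k * \<bar>c k\<bar>)"
      by (rule order_trans[OF sum_abs]) (simp add: abs_mult w_nn)
    also have "\<dots> = (\<Sum>k\<in>?A. w n k * \<bar>c k\<bar>) + (\<Sum>k\<in>?B. w n k * \<bar>c k\<bar>)"
      by (subst sum.Int_Diff[of _ _ "{..<M}"]) auto
    also have "(\<Sum>k\<in>?A. w n k * \<bar>c k\<bar>) \<le> (\<Sum>k\<in>{1..<M}. w n k * \<bar>c k\<bar>)"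
      by (rule sum_mono2) (auto simp: w_nn)
    also have "(\<Sum>k\<in>?B. w n k * \<bar>c k\<bar>) \<le> (\<Sum>k\<in>?B. w n k * (r/2))"
      using M by (intro sum_mono mult_left_mono) (auto simp: w_nn less_imp_le)
    also have "\<dots> \<le> (\<Sum>k=1..n. w n k) * (r/2)"
      using r by (subst sum_distrib_right[symmetric], intro mult_right_mono sum_mono2) (auto simp: w_nn)
    also have "\<dots> \<le> r / 2" using w_sum[of n] r by (simp add: mult_left_le_one_le)
    finally show "norm ((\<Sum>k = 1..n. w n k * c k) - 0) < r" using N[OF n] by simp
  qed
qed

locale critical_means =
  fixes \<rho> :: "nat \<Rightarrow> real"
  assumes rho_nn: "\<And>k. k \<ge> 1 \<Longrightarrow> 0 \<le> \<rho> k" and rho_le: "\<And>k. k \<ge> 1 \<Longrightarrow> \<rho> k \<le> 1"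
    and rho_lim: "\<rho> \<longlonglongrightarrow> 1"
    and rho_div: "filterlim (\<lambda>N. \<Sum>n=1..N. 1 - \<rho> n) at_top sequentially"
begin

definition rho_prod :: "nat \<Rightarrow> nat \<Rightarrow> real" where
  "rho_prod k n = (\<Prod>i\<in>{k<..n}. \<rho> i)"

lemma rho_prod_nonneg: "0 \<le> rho_prod k n"
  unfolding rho_prod_def by (intro prod_nonneg) (auto intro: rho_nn)

lemma rho_prod_le_1: "rho_prod k n \<le> 1"
  unfolding rho_prod_def by (intro prod_le_1) (auto intro: rho_nn rho_le)

lemma rho_prod_trivial: "n \<le> k \<Longrightarrow> rho_prod k n = 1"
  unfolding rho_prod_def by simp

lemma rho_prod_Suc: "k \<le> n \<Longrightarrow> rho_prod k (Suc n) = rho_prod k n * \<rho> (Suc n)"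
proof -
  assume "k \<le> n"
  then have "{k<..Suc n} = insert (Suc n) {k<..n}" by auto
  then show ?thesis by (simp add: rho_prod_def mult.commute)
qed

lemma rho_prod_pow_le: "j \<ge> 1 \<Longrightarrow> rho_prod k n ^ j \<le> rho_prod k n"
  using power_decreasing[of 1 j "rho_prod k n"] rho_prod_nonneg rho_prod_le_1 by simp

(* The bound prod rho_i <= exp(- sum (1 - rho_i)), from rho <= exp(rho - 1). *)
lemma rho_prod_le_exp: "rho_prod k n \<le> exp (- (\<Sum>i\<in>{k<..n}. 1 - \<rho> i))"
proof -
  have "rho_prod k n \<le> (\<Prod>i\<in>{k<..n}. exp (\<rho> i - 1))"
    unfolding rho_prod_def
  proof (intro prod_mono conjI)
    fix i assume "i \<in> {k<..n}"
    then show "0 \<le> \<rho> i" by (auto intro: rho_nn)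
    show "\<rho> i \<le> exp (\<rho> i - 1)" using exp_ge_add_one_self[of "\<rho> i - 1"] by simp
  qed
  also have "\<dots> = exp (- (\<Sum>i\<in>{k<..n}. 1 - \<rho> i))"
    by (simp add: exp_sum[symmetric] sum_negf[symmetric])
  finally show ?thesis .
qed

(* Divergence of sum (1 - rho_i) makes every column of the weights vanish. *)
lemma rho_prod_tendsto_0: "(\<lambda>n. rho_prod k n) \<longlonglongrightarrow> 0"
proof -
  have split: "(\<Sum>i\<in>{k<..n}. 1 - \<rho> i) = (\<Sum>i=1..n. 1 - \<rho> i) - (\<Sum>i=1..k. 1 - \<rho> i)"
    if "k \<le> n" for n
  proof -
    have "{1..n} = {1..k} \<union> {k<..n}" using that by auto
    then show ?thesis by (simp add: sum.union_disjoint ivl_disj_int)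
  qed
  have "filterlim (\<lambda>n. (\<Sum>i=1..n. 1 - \<rho> i) - (\<Sum>i=1..k. 1 - \<rho> i)) at_top sequentially"
    using filterlim_tendsto_add_at_top[OF tendsto_const[of "- (\<Sum>i=1..k. 1 - \<rho> i)"] rho_div]
    by (simp add: algebra_simps)
  then have "filterlim (\<lambda>n. (\<Sum>i\<in>{k<..n}. 1 - \<rho> i)) at_top sequentially"
    by (rule filterlim_cong[THEN iffD1, rotated -1])
       (auto simp: eventually_sequentially split intro: exI[of _ k])
  then have "(\<lambda>n. exp (- (\<Sum>i\<in>{k<..n}. 1 - \<rho> i))) \<longlonglongrightarrow> 0"
    by (intro filterlim_compose[OF exp_at_bot] filterlim_uminus_at_top[THEN iffD1])
  then show ?thesis
    by (rule tendsto_sandwich[rotated 2, OF tendsto_const])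
       (auto intro!: always_eventually rho_prod_nonneg rho_prod_le_exp)
qed

lemma telescope_pow: "(\<Sum>k=1..n. (1 - \<rho> k ^ j) * rho_prod k n ^ j) = 1 - rho_prod 0 n ^ j"
proof (induction n)
  case 0 then show ?case by (simp add: rho_prod_trivial)
next
  case (Suc n)
  have "(\<Sum>k=1..n. (1 - \<rho> k ^ j) * rho_prod k (Suc n) ^ j)
      = (\<Sum>k=1..n. (1 - \<rho> k ^ j) * rho_prod k n ^ j) * \<rho> (Suc n) ^ j"
    by (simp add: sum_distrib_right rho_prod_Suc power_mult_distrib mult.assoc)
  then have "(\<Sum>k=1..Suc n. (1 - \<rho> k ^ j) * rho_prod k (Suc n) ^ j)
      = (1 - rho_prod 0 n ^ j) * \<rho> (Suc n) ^ j + (1 - \<rho> (Suc n) ^ j)"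
    using Suc by (simp add: rho_prod_trivial)
  also have "\<dots> = 1 - rho_prod 0 (Suc n) ^ j"
    using rho_prod_Suc[of 0 n] by (simp add: algebra_simps power_mult_distrib)
  finally show ?case .
qed

lemma weights_sum_le_1: "(\<Sum>k=1..n. (1 - \<rho> k) * rho_prod k n) \<le> 1"
  using telescope_pow[where n=n and j=1] rho_prod_nonneg[of 0 n] by simp

lemma weighted_convolution_le:
  assumes a: "\<And>i. 0 \<le> a i"
  shows "(\<Sum>k=1..n. (1 - \<rho> k) * (\<Sum>i\<in>{k<..n}. rho_prod k (i - 1) * a i)) \<le> (\<Sum>i=1..n. a i)"
proof -
  have "(\<Sum>k=1..n. (1 - \<rho> k) * (\<Sum>i\<in>{k<..n}. rho_prod k (i - 1) * a i))
      = (\<Sum>k\<in>{1..n}. \<Sum>i\<in>{i\<in>{1..n}. k < i}. (1 - \<rho> k) * (rho_prod k (i - 1) * a i))"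
  proof (rule sum.cong[OF refl])
    fix k assume "k \<in> {1..n}"
    then have "{k<..n} = {i\<in>{1..n}. k < i}" by auto
    then show "(1 - \<rho> k) * (\<Sum>i\<in>{k<..n}. rho_prod k (i - 1) * a i) =
        (\<Sum>i\<in>{i\<in>{1..n}. k < i}. (1 - \<rho> k) * (rho_prod k (i - 1) * a i))"
      by (simp add: sum_distrib_left)
  qed
  also have "\<dots> = (\<Sum>i\<in>{1..n}. \<Sum>k\<in>{k\<in>{1..n}. k < i}. (1 - \<rho> k) * (rho_prod k (i - 1) * a i))"
    by (rule sum.swap_restrict) auto
  also have "\<dots> = (\<Sum>i\<in>{1..n}. (\<Sum>k=1..i-1. (1 - \<rho> k) * rho_prod k (i - 1)) * a i)"
    by (intro sum.cong refl) (auto simp: sum_distrib_right intro!: sum.cong)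
  also have "\<dots> \<le> (\<Sum>i\<in>{1..n}. 1 * a i)"
    using weights_sum_le_1 a by (intro sum_mono mult_right_mono) auto
  finally show ?thesis by simp
qed

lemma toeplitz_bound:
  assumes "\<And>n. \<bar>a n\<bar> \<le> (\<Sum>k=1..n. (1 - \<rho> k) * rho_prod k n * c k)" and c: "c \<longlonglongrightarrow> 0"
  shows "a \<longlonglongrightarrow> 0"
proof -
  let ?w = "\<lambda>n k. if k \<ge> 1 then (1 - \<rho> k) * rho_prod k n else 0"
  have sum_w: "(\<Sum>k=1..n. ?w n k * c k) = (\<Sum>k=1..n. (1 - \<rho> k) * rho_prod k n * c k)" for n
    by (rule sum.cong) auto
  have "(\<lambda>n. \<Sum>k=1..n. ?w n k * c k) \<longlonglongrightarrow> 0"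
  proof (rule toeplitz_null[OF _ _ _ c])
    show "0 \<le> ?w n k" for n k using rho_le rho_prod_nonneg by auto
    show "(\<Sum>k=1..n. ?w n k) \<le> 1" for n
      using weights_sum_le_1[of n] by (subst sum.cong[OF refl, of _ _ "\<lambda>k. (1 - \<rho> k) * rho_prod k n"]) auto
    show "(\<lambda>n. ?w n k) \<longlonglongrightarrow> 0" for k
      by (cases "k \<ge> 1") (auto intro!: tendsto_mult_right_zero rho_prod_tendsto_0)
  qed
  then have lim: "(\<lambda>n. \<Sum>k=1..n. (1 - \<rho> k) * rho_prod k n * c k) \<longlonglongrightarrow> 0"
    by (simp only: sum_w)
  show ?thesis
    by (rule Lim_null_comparison[OF always_eventually lim]) (use assms(1) in auto)
qed

(* Since rho_k -> 1, the weights j (1 - rho_k) rho_prod k n ^ j have total mass -> 1. *)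
lemma weighted_pow_mass:
  assumes j: "j \<ge> 1"
  shows "(\<lambda>n. \<Sum>k=1..n. real j * (1 - \<rho> k) * rho_prod k n ^ j) \<longlonglongrightarrow> 1"
proof -
  define c where "c k = (\<Sum>i<j. 1 - \<rho> k ^ i)" for k
  have c: "c \<longlonglongrightarrow> 0"
    unfolding c_def using rho_lim by (auto intro!: tendsto_null_sum tendsto_eq_intros)
  have c_nn: "0 \<le> c k" if "k \<ge> 1" for k
    unfolding c_def using that rho_nn rho_le by (intro sum_nonneg) (auto simp: power_le_one)
  have gap: "real j * (1 - \<rho> k) - (1 - \<rho> k ^ j) = (1 - \<rho> k) * c k" for k
  proof -
    have "1 - \<rho> k ^ j = (1 - \<rho> k) * (\<Sum>i<j. \<rho> k ^ i)" by (simp add: one_diff_power_eq)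
    then show ?thesis unfolding c_def by (simp add: sum_subtractf algebra_simps)
  qed
  have diff: "(\<lambda>n. (\<Sum>k=1..n. real j * (1 - \<rho> k) * rho_prod k n ^ j)
      - (\<Sum>k=1..n. (1 - \<rho> k ^ j) * rho_prod k n ^ j)) \<longlonglongrightarrow> 0"
  proof (rule toeplitz_bound[OF _ c])
    fix n
    have "(\<Sum>k=1..n. real j * (1 - \<rho> k) * rho_prod k n ^ j) - (\<Sum>k=1..n. (1 - \<rho> k ^ j) * rho_prod k n ^ j)
        = (\<Sum>k=1..n. (1 - \<rho> k) * c k * rho_prod k n ^ j)"
      by (simp add: sum_subtractf[symmetric] left_diff_distrib[symmetric] gap)
    moreover have "0 \<le> (\<Sum>k=1..n. (1 - \<rho> k) * c k * rho_prod k n ^ j)"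
      using rho_le c_nn rho_prod_nonneg by (intro sum_nonneg) auto
    moreover have "(\<Sum>k=1..n. (1 - \<rho> k) * c k * rho_prod k n ^ j)
        \<le> (\<Sum>k=1..n. (1 - \<rho> k) * rho_prod k n * c k)"
    proof (rule sum_mono)
      fix k assume "k \<in> {1..n}"
      then have "0 \<le> (1 - \<rho> k) * c k" using rho_le c_nn by simp
      then have "(1 - \<rho> k) * c k * rho_prod k n ^ j \<le> (1 - \<rho> k) * c k * rho_prod k n"
        by (rule mult_left_mono[OF rho_prod_pow_le[OF j]])
      then show "(1 - \<rho> k) * c k * rho_prod k n ^ j \<le> (1 - \<rho> k) * rho_prod k n * c k"
        by (simp add: ac_simps)
    qed
    ultimately show "\<bar>(\<Sum>k=1..n. real j * (1 - \<rho> k) * rho_prod k n ^ j)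
        - (\<Sum>k=1..n. (1 - \<rho> k ^ j) * rho_prod k n ^ j)\<bar>
        \<le> (\<Sum>k=1..n. (1 - \<rho> k) * rho_prod k n * c k)" by simp
  qed
  have "(\<lambda>n. \<Sum>k=1..n. (1 - \<rho> k ^ j) * rho_prod k n ^ j) \<longlonglongrightarrow> 1"
    unfolding telescope_pow using rho_prod_tendsto_0[of 0] j by (auto intro!: tendsto_eq_intros)
  from tendsto_add[OF diff this] show ?thesis by simp
qed

lemma weighted_pow_average:
  assumes j: "j \<ge> 1" and e: "e \<longlonglongrightarrow> c"
  shows "(\<lambda>n. \<Sum>k=1..n. real j * (1 - \<rho> k) * e k * rho_prod k n ^ j) \<longlonglongrightarrow> c"
proof -
  have diff: "(\<lambda>n. (\<Sum>k=1..n. real j * (1 - \<rho> k) * e k * rho_prod k n ^ j)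
      - c * (\<Sum>k=1..n. real j * (1 - \<rho> k) * rho_prod k n ^ j)) \<longlonglongrightarrow> 0"
  proof (rule toeplitz_bound)
    show "(\<lambda>k. real j * \<bar>e k - c\<bar>) \<longlonglongrightarrow> 0"
      using e by (intro tendsto_mult_right_zero tendsto_rabs_zero LIM_zero)
    fix n
    have "(\<Sum>k=1..n. real j * (1 - \<rho> k) * e k * rho_prod k n ^ j)
        - c * (\<Sum>k=1..n. real j * (1 - \<rho> k) * rho_prod k n ^ j)
        = (\<Sum>k=1..n. real j * (1 - \<rho> k) * (e k - c) * rho_prod k n ^ j)"
      unfolding sum_distrib_left sum_subtractf[symmetric]
      by (intro sum.cong refl) (simp add: algebra_simps)
    also have "\<bar>\<dots>\<bar> \<le> (\<Sum>k=1..n. \<bar>real j * (1 - \<rho> k) * (e k - c) * rho_prod k n ^ j\<bar>)"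
      by (rule sum_abs)
    also have "\<dots> \<le> (\<Sum>k=1..n. (1 - \<rho> k) * rho_prod k n * (real j * \<bar>e k - c\<bar>))"
    proof (rule sum_mono)
      fix k assume "k \<in> {1..n}"
      then have r: "0 \<le> 1 - \<rho> k" using rho_le by auto
      have "\<bar>real j * (1 - \<rho> k) * (e k - c) * rho_prod k n ^ j\<bar>
          = ((1 - \<rho> k) * (real j * \<bar>e k - c\<bar>)) * rho_prod k n ^ j"
        using r rho_prod_nonneg by (simp add: abs_mult)
      also have "\<dots> \<le> ((1 - \<rho> k) * (real j * \<bar>e k - c\<bar>)) * rho_prod k n"
        using r rho_prod_pow_le[OF j] by (intro mult_left_mono) auto
      finally show "\<bar>real j * (1 - \<rho> k) * (e k - c) * rho_prod k n ^ j\<bar>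
          \<le> (1 - \<rho> k) * rho_prod k n * (real j * \<bar>e k - c\<bar>)"
        by (simp add: ac_simps)
    qed
    finally show "\<bar>(\<Sum>k=1..n. real j * (1 - \<rho> k) * e k * rho_prod k n ^ j)
        - c * (\<Sum>k=1..n. real j * (1 - \<rho> k) * rho_prod k n ^ j)\<bar>
        \<le> (\<Sum>k=1..n. (1 - \<rho> k) * rho_prod k n * (real j * \<bar>e k - c\<bar>))" .
  qed
  have "(\<lambda>n. c * (\<Sum>k=1..n. real j * (1 - \<rho> k) * rho_prod k n ^ j)) \<longlonglongrightarrow> c * 1"
    using weighted_pow_mass[OF j] by (rule tendsto_mult_left)
  from tendsto_add[OF diff this] show ?thesis by simp
qed

end

lemma pow_diff_le:
  fixes s t :: real
  assumes "0 \<le> t" "t \<le> s" "s \<le> 1"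
  shows "s ^ j - t ^ j \<le> real j * (s - t)"
proof (induction j)
  case 0 then show ?case by simp
next
  case (Suc j)
  have "s ^ Suc j - t ^ Suc j = s * (s ^ j - t ^ j) + t ^ j * (s - t)" by (simp add: algebra_simps)
  also have "s * (s ^ j - t ^ j) \<le> 1 * (real j * (s - t))"
    using Suc assms by (intro mult_mono) (auto simp: power_mono)
  also have "t ^ j * (s - t) \<le> 1 * (s - t)"
    using assms by (intro mult_right_mono) (auto simp: power_le_one)
  finally show ?case by (simp add: algebra_simps)
qed

(* 1 - u = exp(-u) + O(u^2), used to pass from a product to an exponential. *)
lemma one_minus_exp_approx:
  fixes u :: real assumes "0 \<le> u" "u \<le> 1"
  shows "\<bar>(1 - u) - exp (- u)\<bar> \<le> u ^ 2"
proof -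
  have lower: "1 - u \<le> exp (- u)" using exp_ge_add_one_self[of "-u"] by simp
  have "exp u \<ge> 1 + u" using exp_ge_add_one_self[of u] by simp
  then have "exp (- u) \<le> 1 / (1 + u)" using assms by (simp add: exp_minus field_simps)
  also have "1 / (1 + u) \<le> 1 - u + u ^ 2"
    using assms by (simp add: field_simps power2_eq_square)
  finally show ?thesis using lower by simp
qed

section \<open>The model and the asymptotics of the iterated offspring pgfs\<close>

locale immigration_model =
  fixes xi eps :: "nat \<Rightarrow> nat pmf" and J :: nat and lam :: "nat \<Rightarrow> real"
  assumes J: "J \<ge> 2"
    and xi_fin: "\<forall>n\<ge>1. fmom_finite (xi n) 1 \<and> fmom_finite (xi n) 2"
    and eps_fin: "\<forall>n\<ge>1. \<forall>k\<in>{1..J}. fmom_finite (eps n) k"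
    and rho_lt: "\<forall>n\<ge>1. fmom (xi n) 1 < 1"
    and mean_lim: "(\<lambda>n. fmom (xi n) 1) \<longlonglongrightarrow> 1"
    and mean_div: "filterlim (\<lambda>N. \<Sum>n=1..N. 1 - fmom (xi n) 1) at_top sequentially"
    and G2_lim: "(\<lambda>n. fmom (xi n) 2 / (1 - fmom (xi n) 1)) \<longlonglongrightarrow> 0"
    and lam_lim: "\<forall>j\<in>{1..J}. (\<lambda>n. fmom (eps n) j / (real j * (1 - fmom (xi n) 1)))
                      \<longlonglongrightarrow> lam j"
    and lam_J: "lam J = 0"
begin

abbreviation "\<rho> n \<equiv> fmom (xi n) 1"
abbreviation "g n \<equiv> fmom (xi n) 2"
abbreviation "G n \<equiv> pgf (xi n)"
abbreviation "H n \<equiv> pgf (eps n)"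
abbreviation "m k j \<equiv> fmom (eps k) j"

sublocale critical_means "\<lambda>n. fmom (xi n) 1"
  by unfold_locales (use rho_lt mean_lim mean_div fmom_nonneg in \<open>auto intro: less_imp_le\<close>)

(* gap x k n = 1 - G_{k+1} o ... o G_n (x): the argument at which H_k enters
   the pgf of X_n, measured from 1. *)
definition gap :: "real \<Rightarrow> nat \<Rightarrow> nat \<Rightarrow> real" where
  "gap x k n = 1 - comp_range G k n x"

lemma gap_01: "x \<in> {0..1} \<Longrightarrow> 0 \<le> gap x k n \<and> gap x k n \<le> 1"
  using comp_range_pgf_01[of x xi k n] by (auto simp: gap_def)

lemma gap_Suc: "k \<le> n \<Longrightarrow> gap x k (Suc n) = gap (G (Suc n) x) k n"
  by (simp add: gap_def)

lemma gap_le: "x \<in> {0..1} \<Longrightarrow> gap x k n \<le> rho_prod k n * (1 - x)"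
proof (induction n arbitrary: x)
  case 0
  then show ?case by (simp add: gap_def rho_prod_trivial)
next
  case (Suc n)
  show ?case
  proof (cases "Suc n \<le> k")
    case True
    then show ?thesis by (simp add: gap_def rho_prod_trivial)
  next
    case False
    then have kn: "k \<le> n" by simp
    have y: "G (Suc n) x \<in> {0..1}" using Suc.prems pgf_01 by auto
    have "gap x k (Suc n) \<le> rho_prod k n * (1 - G (Suc n) x)"
      using gap_Suc[OF kn] Suc.IH[OF y] by simp
    also have "1 - G (Suc n) x \<le> \<rho> (Suc n) * (1 - x)"
      using pgf_first_order_bound[of "xi (Suc n)" "1 - x"] xi_fin Suc.prems by auto
    then have "rho_prod k n * (1 - G (Suc n) x) \<le> rho_prod k n * (\<rho> (Suc n) * (1 - x))"
      using rho_prod_nonneg by (intro mult_left_mono) auto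
    also have "\<dots> = rho_prod k (Suc n) * (1 - x)" using rho_prod_Suc[OF kn] by simp
    finally show ?thesis .
  qed
qed

lemma gap_le_rho_prod: "x \<in> {0..1} \<Longrightarrow> gap x k n \<le> rho_prod k n"
  using gap_le[of x k n] rho_prod_nonneg[of k n] mult_left_le[of "1 - x" "rho_prod k n"] by auto

definition gap_defect :: "real \<Rightarrow> nat \<Rightarrow> nat \<Rightarrow> real" where
  "gap_defect x k n = rho_prod k n * (1 - x) - gap x k n"

lemma gap_defect_nonneg: "x \<in> {0..1} \<Longrightarrow> 0 \<le> gap_defect x k n"
  using gap_le unfolding gap_defect_def by auto

lemma gap_defect_le:
  "x \<in> {0..1} \<Longrightarrow>
     gap_defect x k n \<le> (\<Sum>i\<in>{k<..n}. rho_prod k (i - 1) * g i / 2 * (gap x i n)^2)"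
proof (induction n arbitrary: x)
  case 0
  then show ?case by (simp add: gap_def gap_defect_def rho_prod_trivial)
next
  case (Suc n)
  show ?case
  proof (cases "Suc n \<le> k")
    case True
    then show ?thesis by (simp add: gap_def gap_defect_def rho_prod_trivial)
  next
    case False
    then have kn: "k \<le> n" by simp
    have y: "G (Suc n) x \<in> {0..1}" using Suc.prems pgf_01 by auto
    have "gap_defect x k (Suc n)
        = rho_prod k n * (\<rho> (Suc n) * (1 - x) - (1 - G (Suc n) x)) + gap_defect (G (Suc n) x) k n"
      using rho_prod_Suc[OF kn] gap_Suc[OF kn] by (simp add: gap_defect_def gap_def algebra_simps)
    also have "\<rho> (Suc n) * (1 - x) - (1 - G (Suc n) x) \<le> g (Suc n) / 2 * (1 - x)^2"
      using pgf_second_order_bound[of "xi (Suc n)" "1 - x"] xi_fin Suc.prems by auto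
    then have "rho_prod k n * (\<rho> (Suc n) * (1 - x) - (1 - G (Suc n) x))
        \<le> rho_prod k n * (g (Suc n) / 2 * (1 - x)^2)"
      using rho_prod_nonneg by (intro mult_left_mono) auto
    also have "gap_defect (G (Suc n) x) k n
        \<le> (\<Sum>i\<in>{k<..n}. rho_prod k (i - 1) * g i / 2 * (gap x i (Suc n))^2)"
      using Suc.IH[OF y] by (simp add: gap_Suc)
    also have "rho_prod k n * (g (Suc n) / 2 * (1 - x)^2) + \<dots>
        = (\<Sum>i\<in>{k<..Suc n}. rho_prod k (i - 1) * g i / 2 * (gap x i (Suc n))^2)"
    proof -
      have "{k<..Suc n} = insert (Suc n) {k<..n}" using kn by auto
      then show ?thesis by (simp add: gap_def comp_range_trivial)
    qed
    finally show ?thesis by simp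
  qed
qed

lemma weighted_gap_defect_le:
  assumes x: "x \<in> {0..1}"
  shows "(\<Sum>k=1..n. (1 - \<rho> k) * gap_defect x k n)
      \<le> (\<Sum>i=1..n. (1 - \<rho> i) * rho_prod i n * (g i / (2 * (1 - \<rho> i))))"
proof -
  have sq: "(gap x i n)^2 \<le> rho_prod i n" for i
    using gap_01[OF x, of i n] gap_le_rho_prod[OF x, of i n]
    by (smt (verit) mult_left_le power2_eq_square)
  have "(\<Sum>k=1..n. (1 - \<rho> k) * gap_defect x k n)
      \<le> (\<Sum>k=1..n. (1 - \<rho> k) * (\<Sum>i\<in>{k<..n}. rho_prod k (i - 1) * (g i / 2 * rho_prod i n)))"
  proof (intro sum_mono mult_left_mono)
    fix k assume "k \<in> {1..n}"
    then show "0 \<le> 1 - \<rho> k" using rho_le by auto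
    show "gap_defect x k n \<le> (\<Sum>i\<in>{k<..n}. rho_prod k (i - 1) * (g i / 2 * rho_prod i n))"
    proof (rule order_trans[OF gap_defect_le[OF x] sum_mono])
      fix i
      have "0 \<le> rho_prod k (i - 1) * g i / 2" using rho_prod_nonneg fmom_nonneg by simp
      from mult_left_mono[OF sq[of i] this]
      show "rho_prod k (i - 1) * g i / 2 * (gap x i n)^2 \<le> rho_prod k (i - 1) * (g i / 2 * rho_prod i n)"
        by (simp add: algebra_simps)
    qed
  qed
  also have "\<dots> \<le> (\<Sum>i=1..n. g i / 2 * rho_prod i n)"
    using rho_prod_nonneg fmom_nonneg by (intro weighted_convolution_le) simp
  also have "\<dots> = (\<Sum>i=1..n. (1 - \<rho> i) * rho_prod i n * (g i / (2 * (1 - \<rho> i))))"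
    using rho_lt by (intro sum.cong refl) (auto simp: field_simps)
  finally show ?thesis .
qed

(* Hypothesis G_n''(1) = o(1 - rho_n) makes the weighted defects negligible. *)
lemma weighted_gap_defect_tendsto_0:
  assumes x: "x \<in> {0..1}"
  shows "(\<lambda>n. \<Sum>k=1..n. (1 - \<rho> k) * gap_defect x k n) \<longlonglongrightarrow> 0"
proof (rule toeplitz_bound)
  show "(\<lambda>i. g i / (2 * (1 - \<rho> i))) \<longlonglongrightarrow> 0"
    using tendsto_divide[OF G2_lim tendsto_const[of 2]] by (simp add: field_simps)
  fix n
  have "0 \<le> (\<Sum>k=1..n. (1 - \<rho> k) * gap_defect x k n)"
    using gap_defect_nonneg[OF x] rho_le by (intro sum_nonneg mult_nonneg_nonneg) auto
  then show "\<bar>\<Sum>k=1..n. (1 - \<rho> k) * gap_defect x k n\<bar>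
      \<le> (\<Sum>i=1..n. (1 - \<rho> i) * rho_prod i n * (g i / (2 * (1 - \<rho> i))))"
    using weighted_gap_defect_le[OF x, of n] by simp
qed

section \<open>The immigration moments along the gaps\<close>

definition eps_ratio :: "nat \<Rightarrow> nat \<Rightarrow> real" where
  "eps_ratio j k = m k j / (real j * (1 - \<rho> k))"

lemma eps_ratio_lim: "j \<in> {1..J} \<Longrightarrow> eps_ratio j \<longlonglongrightarrow> lam j"
  using lam_lim unfolding eps_ratio_def by auto

lemma moment_eq: "j \<ge> 1 \<Longrightarrow> k \<ge> 1 \<Longrightarrow> m k j = real j * (1 - \<rho> k) * eps_ratio j k"
  using rho_lt unfolding eps_ratio_def by auto

lemma moment_le: "j \<ge> 1 \<Longrightarrow> k \<ge> 1 \<Longrightarrow> m k j \<le> real j * (1 - \<rho> k) * \<bar>eps_ratio j k\<bar>"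
  using moment_eq[of j k] rho_le[of k] by (simp add: mult_left_mono)

lemma moment_linear_lim:
  assumes j: "j \<in> {1..J}"
  shows "(\<lambda>n. \<Sum>k=1..n. m k j * (rho_prod k n * (1 - x)) ^ j) \<longlonglongrightarrow> lam j * (1 - x) ^ j"
proof -
  have "(\<Sum>k=1..n. real j * (1 - \<rho> k) * eps_ratio j k * rho_prod k n ^ j)
      = (\<Sum>k=1..n. m k j * rho_prod k n ^ j)" for n
    using j by (intro sum.cong refl) (simp add: moment_eq)
  then have "(\<lambda>n. \<Sum>k=1..n. m k j * rho_prod k n ^ j) \<longlonglongrightarrow> lam j"
    using weighted_pow_average[of j "eps_ratio j" "lam j"] eps_ratio_lim[OF j] j by simp
  then have "(\<lambda>n. (\<Sum>k=1..n. m k j * rho_prod k n ^ j) * (1 - x) ^ j) \<longlonglongrightarrow> lam j * (1 - x) ^ j"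
    by (rule tendsto_mult_right)
  moreover have "(\<Sum>k=1..n. m k j * rho_prod k n ^ j) * (1 - x) ^ j
      = (\<Sum>k=1..n. m k j * (rho_prod k n * (1 - x)) ^ j)" for n
    unfolding sum_distrib_right by (simp add: power_mult_distrib ac_simps)
  ultimately show ?thesis by simp
qed

lemma moment_gap_diff_le:
  assumes x: "x \<in> {0..1}" and j: "j \<ge> 1" and k: "k \<ge> 1"
    and B: "\<bar>eps_ratio j k\<bar> \<le> B"
  shows "\<bar>m k j * ((rho_prod k n * (1 - x)) ^ j - gap x k n ^ j)\<bar>
      \<le> real j * real j * B * ((1 - \<rho> k) * gap_defect x k n)"
proof -
  have gap: "0 \<le> gap x k n" "gap x k n \<le> rho_prod k n * (1 - x)"
    using gap_01[OF x] gap_le[OF x] by auto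
  have "rho_prod k n * (1 - x) \<le> 1"
    using rho_prod_le_1[of k n] rho_prod_nonneg[of k n] x by (simp add: mult_le_one)
  then have pow_diff: "(rho_prod k n * (1 - x)) ^ j - gap x k n ^ j \<le> real j * gap_defect x k n"
    unfolding gap_defect_def using pow_diff_le[OF gap] by simp
  have diff_nn: "0 \<le> (rho_prod k n * (1 - x)) ^ j - gap x k n ^ j"
    using gap by (simp add: power_mono)
  have mom: "m k j \<le> real j * (1 - \<rho> k) * B"
    using moment_le[OF j k] B rho_le[OF k] by (smt (verit) mult_left_mono mult_nonneg_nonneg of_nat_0_le_iff)
  have "\<bar>m k j * ((rho_prod k n * (1 - x)) ^ j - gap x k n ^ j)\<bar>
      = m k j * ((rho_prod k n * (1 - x)) ^ j - gap x k n ^ j)"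
    using diff_nn fmom_nonneg by simp
  also have "\<dots> \<le> (real j * (1 - \<rho> k) * B) * (real j * gap_defect x k n)"
    using diff_nn pow_diff mom fmom_nonneg[of "eps k" j] by (intro mult_mono) auto
  finally show ?thesis by (simp add: ac_simps)
qed

lemma moment_gap_lim:
  assumes x: "x \<in> {0..1}" and j: "j \<in> {1..J}"
  shows "(\<lambda>n. \<Sum>k=1..n. m k j * gap x k n ^ j) \<longlonglongrightarrow> lam j * (1 - x) ^ j"
proof -
  obtain B where B: "\<And>k. \<bar>eps_ratio j k\<bar> \<le> B"
    using convergent_imp_Bseq[of "eps_ratio j"] eps_ratio_lim[OF j]
    by (auto simp: convergent_def Bseq_def)
  have defect: "(\<lambda>n. real j * real j * B * (\<Sum>k=1..n. (1 - \<rho> k) * gap_defect x k n)) \<longlonglongrightarrow> 0"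
    using weighted_gap_defect_tendsto_0[OF x] by (rule tendsto_mult_right_zero)
  have diff: "(\<lambda>n. (\<Sum>k=1..n. m k j * (rho_prod k n * (1 - x)) ^ j)
      - (\<Sum>k=1..n. m k j * gap x k n ^ j)) \<longlonglongrightarrow> 0"
  proof (rule Lim_null_comparison[OF always_eventually defect], intro allI)
    fix n
    have "\<bar>(\<Sum>k=1..n. m k j * (rho_prod k n * (1 - x)) ^ j) - (\<Sum>k=1..n. m k j * gap x k n ^ j)\<bar>
        \<le> (\<Sum>k=1..n. \<bar>m k j * ((rho_prod k n * (1 - x)) ^ j - gap x k n ^ j)\<bar>)"
      by (simp add: sum_subtractf[symmetric] right_diff_distrib sum_abs)
    also have "\<dots> \<le> (\<Sum>k=1..n. real j * real j * B * ((1 - \<rho> k) * gap_defect x k n))"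
      using j B by (intro sum_mono moment_gap_diff_le[OF x]) auto
    finally show "norm ((\<Sum>k=1..n. m k j * (rho_prod k n * (1 - x)) ^ j)
        - (\<Sum>k=1..n. m k j * gap x k n ^ j))
        \<le> real j * real j * B * (\<Sum>k=1..n. (1 - \<rho> k) * gap_defect x k n)"
      by (simp add: sum_distrib_left)
  qed
  from tendsto_diff[OF moment_linear_lim[OF j, where x=x] diff] show ?thesis by simp
qed

section \<open>The limit of the pgf of the population size\<close>

definition limit_exponent :: "real \<Rightarrow> real" where
  "limit_exponent x = (\<Sum>j\<in>{1..<J}. (-1) ^ j / fact j * lam j * (1 - x) ^ j)"

definition taylor_rem :: "real \<Rightarrow> nat \<Rightarrow> nat \<Rightarrow> real" where
  "taylor_rem x k n = H k (1 - gap x k n) - (\<Sum>j<J. m k j / fact j * (- gap x k n) ^ j)"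

lemma H_gap_expansion:
  "H k (1 - gap x k n) - 1
     = (\<Sum>j\<in>{1..<J}. m k j / fact j * (- gap x k n) ^ j) + taylor_rem x k n"
proof -
  have "(\<Sum>j<J. m k j / fact j * (- gap x k n) ^ j)
      = 1 + (\<Sum>j\<in>{1..<J}. m k j / fact j * (- gap x k n) ^ j)"
    using J by (simp add: atLeast0LessThan[symmetric] sum.atLeast_Suc_lessThan One_nat_def)
  then show ?thesis unfolding taylor_rem_def by simp
qed

lemma taylor_rem_le:
  assumes x: "x \<in> {0..1}" and k: "k \<ge> 1"
  shows "\<bar>taylor_rem x k n\<bar> \<le> m k J * rho_prod k n"
proof -
  have fin: "\<forall>i\<in>{1..J}. fmom_finite (eps k) i" using eps_fin k by auto
  have gap: "0 \<le> gap x k n" "gap x k n \<le> 1" using gap_01[OF x] by auto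
  have bound: "0 \<le> (-1) ^ J * taylor_rem x k n"
      "(-1) ^ J * taylor_rem x k n \<le> m k J / fact J * gap x k n ^ J"
    unfolding taylor_rem_def using pgf_taylor_bound[OF fin gap] by auto
  have "\<bar>taylor_rem x k n\<bar> = \<bar>(-1) ^ J * taylor_rem x k n\<bar>" by (simp add: abs_mult)
  then have "\<bar>taylor_rem x k n\<bar> \<le> m k J / fact J * gap x k n ^ J" using bound by simp
  also have "\<dots> \<le> m k J * gap x k n ^ J"
    using fmom_nonneg[of "eps k" J] gap
    by (intro mult_right_mono) (auto simp: divide_le_eq fact_ge_1 mult_le_cancel_left1)
  also have "\<dots> \<le> m k J * rho_prod k n"
  proof (rule mult_left_mono[OF _ fmom_nonneg])
    have "gap x k n ^ J \<le> gap x k n ^ 1" using J gap by (intro power_decreasing) auto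
    then show "gap x k n ^ J \<le> rho_prod k n" using gap_le_rho_prod[OF x, of k n] by simp
  qed
  finally show ?thesis .
qed

(* Since lam_J = 0, the remainders are negligible in total. *)
lemma taylor_rem_sum_tendsto_0:
  assumes x: "x \<in> {0..1}"
  shows "(\<lambda>n. \<Sum>k=1..n. taylor_rem x k n) \<longlonglongrightarrow> 0"
proof (rule toeplitz_bound)
  show "(\<lambda>k. real J * \<bar>eps_ratio J k\<bar>) \<longlonglongrightarrow> 0"
    using eps_ratio_lim[of J] lam_J J by (intro tendsto_mult_right_zero tendsto_rabs_zero) auto
  fix n
  have "(\<Sum>k=1..n. \<bar>taylor_rem x k n\<bar>) \<le> (\<Sum>k=1..n. (1 - \<rho> k) * rho_prod k n * (real J * \<bar>eps_ratio J k\<bar>))"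
  proof (rule sum_mono)
    fix k assume k: "k \<in> {1..n}"
    have "\<bar>taylor_rem x k n\<bar> \<le> m k J * rho_prod k n" using taylor_rem_le[OF x] k by auto
    also have "\<dots> \<le> (real J * (1 - \<rho> k) * \<bar>eps_ratio J k\<bar>) * rho_prod k n"
      using moment_le[of J k] J k rho_prod_nonneg by (intro mult_right_mono) auto
    finally show "\<bar>taylor_rem x k n\<bar> \<le> (1 - \<rho> k) * rho_prod k n * (real J * \<bar>eps_ratio J k\<bar>)"
      by (simp add: ac_simps)
  qed
  then show "\<bar>\<Sum>k=1..n. taylor_rem x k n\<bar>
      \<le> (\<Sum>k=1..n. (1 - \<rho> k) * rho_prod k n * (real J * \<bar>eps_ratio J k\<bar>))"
    using sum_abs[of "\<lambda>k. taylor_rem x k n" "{1..n}"] by linarith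
qed

lemma sum_H_gap_lim:
  assumes x: "x \<in> {0..1}"
  shows "(\<lambda>n. \<Sum>k=1..n. (H k (1 - gap x k n) - 1)) \<longlonglongrightarrow> limit_exponent x"
proof -
  have split: "(\<Sum>k=1..n. (H k (1 - gap x k n) - 1)) =
      (\<Sum>j\<in>{1..<J}. (-1) ^ j / fact j * (\<Sum>k=1..n. m k j * gap x k n ^ j))
      + (\<Sum>k=1..n. taylor_rem x k n)" for n
  proof -
    have "(\<Sum>k=1..n. (H k (1 - gap x k n) - 1)) =
        (\<Sum>j\<in>{1..<J}. \<Sum>k=1..n. m k j / fact j * (- gap x k n) ^ j) + (\<Sum>k=1..n. taylor_rem x k n)"
      by (simp add: H_gap_expansion sum.distrib sum.swap[of _ "{1..n}"])
    also have "(\<Sum>j\<in>{1..<J}. \<Sum>k=1..n. m k j / fact j * (- gap x k n) ^ j)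
        = (\<Sum>j\<in>{1..<J}. (-1) ^ j / fact j * (\<Sum>k=1..n. m k j * gap x k n ^ j))"
      by (intro sum.cong refl) (simp add: sum_distrib_left power_minus[of "gap x _ n"] mult_ac)
    finally show ?thesis .
  qed
  have "(\<lambda>n. (\<Sum>j\<in>{1..<J}. (-1) ^ j / fact j * (\<Sum>k=1..n. m k j * gap x k n ^ j))
        + (\<Sum>k=1..n. taylor_rem x k n))
      \<longlonglongrightarrow> (\<Sum>j\<in>{1..<J}. (-1) ^ j / fact j * (lam j * (1 - x) ^ j)) + 0"
    using moment_gap_lim[OF x]
    by (intro tendsto_add tendsto_sum tendsto_mult_left taylor_rem_sum_tendsto_0[OF x]) auto
  then show ?thesis unfolding split limit_exponent_def by (simp add: mult.assoc)
qed

(* The product-to-exponential step: each factor differs from exp(H_k - 1) by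
   O((1 - H_k)^2), and 1 - H_k(1 - gap) <= m_{k,1} gap is of the order of a weight. *)
lemma H_gap_exp_approx:
  assumes x: "x \<in> {0..1}" and k: "k \<ge> 1"
  shows "\<bar>H k (1 - gap x k n) - exp (- (1 - H k (1 - gap x k n)))\<bar>
      \<le> (1 - \<rho> k) * rho_prod k n * ((1 - \<rho> k) * (eps_ratio 1 k)^2)"
proof -
  let ?v = "H k (1 - gap x k n)" and ?c = "(1 - \<rho> k) * (eps_ratio 1 k)^2"
  have u: "0 \<le> 1 - ?v" "1 - ?v \<le> 1" using gap_01[OF x, of k n] pgf_01 by auto
  have "1 - ?v \<le> m k 1 * gap x k n"
    using pgf_first_order_bound[of "eps k" "gap x k n"] eps_fin k J gap_01[OF x, of k n] by auto
  also have "\<dots> \<le> m k 1 * rho_prod k n"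
    using gap_le_rho_prod[OF x] fmom_nonneg by (intro mult_left_mono) auto
  also have "\<dots> \<le> (1 - \<rho> k) * \<bar>eps_ratio 1 k\<bar> * rho_prod k n"
    using moment_le[of 1 k] k rho_prod_nonneg by (intro mult_right_mono) auto
  finally have "(1 - ?v)^2 \<le> ((1 - \<rho> k) * \<bar>eps_ratio 1 k\<bar> * rho_prod k n)^2"
    using u by (intro power_mono) auto
  also have "\<dots> = ((1 - \<rho> k) * rho_prod k n * ?c) * rho_prod k n"
    by (simp add: power2_eq_square)
  also have "\<dots> \<le> (1 - \<rho> k) * rho_prod k n * ?c"
    using rho_prod_le_1 rho_le[OF k] rho_prod_nonneg by (intro mult_left_le) auto
  finally show ?thesis using one_minus_exp_approx[OF u] by simp
qed

lemma prod_H_gap_lim: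
  assumes x: "x \<in> {0..1}"
  shows "(\<lambda>n. \<Prod>k=1..n. H k (1 - gap x k n)) \<longlonglongrightarrow> exp (limit_exponent x)"
proof -
  let ?v = "\<lambda>n k. H k (1 - gap x k n)"
  have "(\<lambda>n. (\<Prod>k=1..n. ?v n k) - exp (\<Sum>k=1..n. (?v n k - 1))) \<longlonglongrightarrow> 0"
  proof (rule toeplitz_bound)
    have "(\<lambda>k. (1 - \<rho> k) * (eps_ratio 1 k)^2) \<longlonglongrightarrow> (1 - 1) * (lam 1)^2"
      using J eps_ratio_lim[of 1] by (intro tendsto_intros rho_lim) auto
    then show "(\<lambda>k. (1 - \<rho> k) * (eps_ratio 1 k)^2) \<longlonglongrightarrow> 0" by simp
    fix n
    have "exp (\<Sum>k=1..n. (?v n k - 1)) = (\<Prod>k=1..n. exp (- (1 - ?v n k)))"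
      by (simp add: exp_sum)
    moreover have "\<bar>(\<Prod>k=1..n. ?v n k) - (\<Prod>k=1..n. exp (- (1 - ?v n k)))\<bar>
        \<le> (\<Sum>k=1..n. \<bar>?v n k - exp (- (1 - ?v n k))\<bar>)"
      using norm_prod_diff[of "{1..n}" "?v n" "\<lambda>k. exp (- (1 - ?v n k))"]
        gap_01[OF x] pgf_01 by fastforce
    moreover have "(\<Sum>k=1..n. \<bar>?v n k - exp (- (1 - ?v n k))\<bar>)
        \<le> (\<Sum>k=1..n. (1 - \<rho> k) * rho_prod k n * ((1 - \<rho> k) * (eps_ratio 1 k)^2))"
      using H_gap_exp_approx[OF x] by (intro sum_mono) auto
    ultimately show "\<bar>(\<Prod>k=1..n. ?v n k) - exp (\<Sum>k=1..n. (?v n k - 1))\<bar>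
        \<le> (\<Sum>k=1..n. (1 - \<rho> k) * rho_prod k n * ((1 - \<rho> k) * (eps_ratio 1 k)^2))"
      by linarith
  qed
  from tendsto_add[OF this tendsto_exp[OF sum_H_gap_lim[OF x]]] show ?thesis by simp
qed

lemma pgf_X_law_lim:
  assumes x: "x \<in> {0..1}"
  shows "(\<lambda>n. pgf (X_law xi eps n) x) \<longlonglongrightarrow> exp (limit_exponent x)"
  using prod_H_gap_lim[OF x] by (simp add: pgf_X_law[OF x] gap_def)

end

section \<open>The compound Poisson weights and the limiting exponent\<close>

definition cp_weight :: "nat \<Rightarrow> (nat \<Rightarrow> real) \<Rightarrow> nat \<Rightarrow> real" where
  "cp_weight J lam j = 1 / fact j * (\<Sum>i=0..J-j-1. (-1) ^ i / fact i * lam (j + i))"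

lemma binomial_centered:
  fixes x :: real
  assumes j: "j \<ge> 1"
  shows "(\<Sum>k\<in>{1..j}. real (j choose k) * (-1) ^ (j - k) * (x ^ k - 1)) = (x - 1) ^ j"
proof -
  have "(\<Sum>k\<le>j. real (j choose k) * (-1) ^ (j - k) * (x ^ k - 1))
      = (\<Sum>k\<le>j. real (j choose k) * x ^ k * (-1) ^ (j - k))
        - (\<Sum>k\<le>j. real (j choose k) * 1 ^ k * (-1) ^ (j - k))"
    by (simp add: sum_subtractf[symmetric] algebra_simps)
  also have "\<dots> = (x - 1) ^ j - (1 - 1) ^ j"
    by (simp only: binomial_ring[symmetric] diff_conv_add_uminus)
  also have "\<dots> = (x - 1) ^ j" using j by simp
  finally show ?thesis
    by (simp add: atMost_atLeast0 sum.atLeast_Suc_atMost[of 0 j] One_nat_def)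
qed

lemma cp_weight_term:
  assumes k: "k \<in> {1..<J}"
  shows "cp_weight J lam k * (x ^ k - 1)
    = (\<Sum>j\<in>{j\<in>{1..<J}. k \<le> j}. lam j / fact j * (real (j choose k) * (-1) ^ (j - k) * (x ^ k - 1)))"
proof -
  have "(\<Sum>i=0..J-k-1. (-1) ^ i / fact i * lam (k + i))
      = (\<Sum>j=k..<J. (-1) ^ (j - k) / fact (j - k) * lam j)"
  proof -
    have "{0..J-k-1} = {0..<J-k}" using k by auto
    moreover have "(\<Sum>j=0+k..<(J-k)+k. (-1) ^ (j - k) / fact (j - k) * lam j)
        = (\<Sum>i=0..<J-k. (-1) ^ i / fact i * lam (i + k))"
      by (subst sum.shift_bounds_nat_ivl) simp
    ultimately show ?thesis using k by (simp add: add.commute)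
  qed
  then have "cp_weight J lam k * (x ^ k - 1)
      = (\<Sum>j=k..<J. 1 / fact k * ((-1) ^ (j - k) / fact (j - k) * lam j) * (x ^ k - 1))"
    unfolding cp_weight_def by (simp add: sum_distrib_left sum_distrib_right)
  also have "\<dots> = (\<Sum>j=k..<J. lam j / fact j * (real (j choose k) * (-1) ^ (j - k) * (x ^ k - 1)))"
  proof (rule sum.cong[OF refl])
    fix j assume "j \<in> {k..<J}"
    then have "real (j choose k) = fact j / (fact k * fact (j - k))"
      using binomial_fact[of k j] by simp
    then show "1 / fact k * ((-1) ^ (j - k) / fact (j - k) * lam j) * (x ^ k - 1)
        = lam j / fact j * (real (j choose k) * (-1) ^ (j - k) * (x ^ k - 1))"
      by simp
  qed
  also have "{k..<J} = {j\<in>{1..<J}. k \<le> j}" using k by auto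
  finally show ?thesis .
qed

lemma cp_weight_exponent:
  fixes lam :: "nat \<Rightarrow> real" and x :: real
  shows "(\<Sum>j\<in>{1..<J}. (-1) ^ j / fact j * lam j * (1 - x) ^ j)
    = (\<Sum>j=1..J-1. cp_weight J lam j * (x ^ j - 1))"
proof -
  let ?F = "\<lambda>k j. lam j / fact j * (real (j choose k) * (-1) ^ (j - k) * (x ^ k - 1))"
  have "(\<Sum>j=1..J-1. cp_weight J lam j * (x ^ j - 1))
      = (\<Sum>k\<in>{1..<J}. \<Sum>j\<in>{j\<in>{1..<J}. k \<le> j}. ?F k j)"
    by (rule sum.cong) (auto simp: cp_weight_term)
  also have "\<dots> = (\<Sum>j\<in>{1..<J}. \<Sum>k\<in>{k\<in>{1..<J}. k \<le> j}. ?F k j)"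
    by (rule sum.swap_restrict) auto
  also have "\<dots> = (\<Sum>j\<in>{1..<J}. lam j / fact j * (x - 1) ^ j)"
  proof (rule sum.cong[OF refl])
    fix j assume j: "j \<in> {1..<J}"
    then have "{k\<in>{1..<J}. k \<le> j} = {1..j}" by auto
    moreover have "(\<Sum>k\<in>{1..j}. ?F k j)
        = lam j / fact j * (\<Sum>k\<in>{1..j}. real (j choose k) * (-1) ^ (j - k) * (x ^ k - 1))"
      by (simp only: sum_distrib_left)
    ultimately show "(\<Sum>k\<in>{k\<in>{1..<J}. k \<le> j}. ?F k j) = lam j / fact j * (x - 1) ^ j"
      using binomial_centered[of j x] j by simp
  qed
  also have "\<dots> = (\<Sum>j\<in>{1..<J}. (-1) ^ j / fact j * lam j * (1 - x) ^ j)"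
  proof (rule sum.cong[OF refl])
    fix j
    have "(x - 1) ^ j = (-1) ^ j * (1 - x) ^ j" by (simp add: power_mult_distrib[symmetric])
    then show "lam j / fact j * (x - 1) ^ j = (-1) ^ j / fact j * lam j * (1 - x) ^ j" by simp
  qed
  finally show ?thesis by simp
qed

(* Nonnegativity of mu: an alternating-sum inequality for binomial coefficients,
   obtained by integrating the Bonferroni inequality against s^(k-1) over [0,1]. *)

lemma truncated_binomial_nonneg:
  assumes "0 \<le> s" "s \<le> 1"
  shows "0 \<le> (\<Sum>i<M. real (N choose i) * (- s) ^ i) + real (N choose M) * s ^ M"
proof -
  have "(\<Sum>i<M. real (N choose i) * (- s) ^ i) = (1 - s) ^ N - binom_tail M N s"
    by (simp add: binom_tail_def)
  moreover have "binom_tail M N s \<le> real (N choose M) * s ^ M"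
  proof -
    have "\<bar>binom_tail M N s\<bar> = \<bar>(-1) ^ M * binom_tail M N s\<bar>" by (simp add: abs_mult)
    then show ?thesis using binom_tail_bound[OF assms, of M N] by linarith
  qed
  moreover have "0 \<le> (1 - s) ^ N" using assms by simp
  ultimately show ?thesis by linarith
qed

lemma deriv_pow_div:
  assumes "p \<ge> 1"
  shows "((\<lambda>s::real. s ^ p / real p) has_real_derivative s ^ (p - 1)) (at s)"
  using DERIV_cdivide[OF DERIV_pow[of p s], of "real p"] assms by (simp add: One_nat_def)

definition binom_primitive :: "nat \<Rightarrow> nat \<Rightarrow> nat \<Rightarrow> real \<Rightarrow> real" where
  "binom_primitive N M k s = (\<Sum>i<M. (-1) ^ i * real (N choose i) * (s ^ (k + i) / real (k + i)))
                             + real (N choose M) * (s ^ (k + M) / real (k + M))"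

lemma binom_primitive_deriv:
  assumes k: "k \<ge> 1"
  shows "(binom_primitive N M k has_real_derivative
      s ^ (k - 1) * ((\<Sum>i<M. real (N choose i) * (- s) ^ i) + real (N choose M) * s ^ M)) (at s)"
proof -
  have pw: "s ^ (k + i - 1) = s ^ (k - 1) * s ^ i" for i
    using k by (simp add: power_add[symmetric])
  have sum_eq: "(\<Sum>i<M. (-1) ^ i * real (N choose i) * s ^ (k + i - 1))
      = s ^ (k - 1) * (\<Sum>i<M. real (N choose i) * (- s) ^ i)"
    unfolding sum_distrib_left by (rule sum.cong[OF refl]) (simp add: pw power_minus[of s] mult_ac)
  have last_eq: "real (N choose M) * s ^ (k + M - 1) = s ^ (k - 1) * (real (N choose M) * s ^ M)"
    by (simp add: pw mult_ac)
  have deriv: "(binom_primitive N M k has_real_derivative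
      (\<Sum>i<M. (-1) ^ i * real (N choose i) * s ^ (k + i - 1)) + real (N choose M) * s ^ (k + M - 1)) (at s)"
  proof -
    have "((\<lambda>s. (-1) ^ i * real (N choose i) * (s ^ (k + i) / real (k + i))) has_real_derivative
        (-1) ^ i * real (N choose i) * s ^ (k + i - 1)) (at s)" for i
      by (intro DERIV_cmult deriv_pow_div) (use k in simp)
    moreover have "((\<lambda>s. real (N choose M) * (s ^ (k + M) / real (k + M))) has_real_derivative
        real (N choose M) * s ^ (k + M - 1)) (at s)"
      by (intro DERIV_cmult deriv_pow_div) (use k in simp)
    ultimately show ?thesis unfolding binom_primitive_def[abs_def] by (intro DERIV_add DERIV_sum)
  qed
  show ?thesis using deriv unfolding sum_eq last_eq distrib_left .
qed

(* The primitive is nondecreasing on [0,1]; comparing its values at 0 and 1 gives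
   sum_{i<M} (-1)^i C(N,i)/(k+i) >= - C(N,M)/(k+M). *)
lemma alternating_binomial_lower:
  fixes N M k :: nat
  assumes k: "k \<ge> 1"
  shows "- real (N choose M) / real (k + M) \<le> (\<Sum>i<M. (-1) ^ i * real (N choose i) / real (k + i))"
proof -
  have "binom_primitive N M k 0 \<le> binom_primitive N M k 1"
  proof (rule DERIV_nonneg_imp_nondecreasing[of 0 1])
    fix s :: real assume s: "0 \<le> s" "s \<le> 1"
    have "0 \<le> s ^ (k - 1) * ((\<Sum>i<M. real (N choose i) * (- s) ^ i) + real (N choose M) * s ^ M)"
      using truncated_binomial_nonneg[OF s] s by simp
    then show "\<exists>y. DERIV (binom_primitive N M k) s :> y \<and> y \<ge> 0"
      using binom_primitive_deriv[OF k, of N M s] by blast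
  qed simp
  moreover have "binom_primitive N M k 0 = 0"
    unfolding binom_primitive_def using k by (simp add: power_0_left)
  moreover have "binom_primitive N M k 1 = (\<Sum>i<M. (-1) ^ i * real (N choose i) / real (k + i))
                        + real (N choose M) / real (k + M)"
    unfolding binom_primitive_def by simp
  ultimately have "0 \<le> (\<Sum>i<M. (-1) ^ i * real (N choose i) / real (k + i))
                        + real (N choose M) / real (k + M)"
    by linarith
  then show ?thesis by (simp only: minus_divide_left[symmetric])
qed

(* Choosing a (k+i)-subset and then a k-subset of it: C(n,k+i) C(k+i,k) = C(n,k) C(n-k,i). *)
lemma choose_mult_shift: "(n choose (k + i)) * ((k + i) choose k) = (n choose k) * ((n - k) choose i)"
proof (cases "k + i \<le> n")
  case True
  then show ?thesis using choose_mult[of k "k + i" n] by simp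
next
  case False
  then show ?thesis by (cases "k \<le> n") (auto simp: binomial_eq_0)
qed

(* The pointwise inequality behind mu_k >= 0, for a value Y of the immigration. *)
lemma alternating_choose_lower:
  fixes Y k J :: nat
  assumes k: "1 \<le> k" "k < J"
  shows "- real (J choose k) / real J * real (Y choose J)
     \<le> (\<Sum>i<J-k. (-1) ^ i * real ((k + i) choose k) / real (k + i) * real (Y choose (k + i)))"
proof -
  have "(\<Sum>i<J-k. (-1) ^ i * real ((k + i) choose k) / real (k + i) * real (Y choose (k + i)))
      = real (Y choose k) * (\<Sum>i<J-k. (-1) ^ i * real ((Y - k) choose i) / real (k + i))"
    unfolding sum_distrib_left
  proof (rule sum.cong[OF refl])
    fix i
    have "real (Y choose (k + i)) * real ((k + i) choose k) = real (Y choose k) * real ((Y - k) choose i)"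
      using choose_mult_shift[of Y k i] by (metis of_nat_mult)
    then show "(-1) ^ i * real ((k + i) choose k) / real (k + i) * real (Y choose (k + i))
        = real (Y choose k) * ((-1) ^ i * real ((Y - k) choose i) / real (k + i))"
      by (simp add: field_simps)
  qed
  moreover have "real (Y choose k) * (- real ((Y - k) choose (J - k)) / real (k + (J - k)))
      \<le> real (Y choose k) * (\<Sum>i<J-k. (-1) ^ i * real ((Y - k) choose i) / real (k + i))"
    using alternating_binomial_lower[OF k(1), of "Y - k" "J - k"] by (intro mult_left_mono) auto
  moreover have "real (Y choose k) * (- real ((Y - k) choose (J - k)) / real (k + (J - k)))
      = - real (J choose k) / real J * real (Y choose J)"
  proof -
    have "real (Y choose J) * real (J choose k) = real (Y choose k) * real ((Y - k) choose (J - k))"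
      using choose_mult_shift[of Y k "J - k"] k by (metis le_add_diff_inverse less_imp_le of_nat_mult)
    then show ?thesis using k by (simp add: field_simps)
  qed
  ultimately show ?thesis by linarith
qed

lemma fmom_alternating_lower:
  fixes p :: "nat pmf"
  assumes fin: "\<forall>j\<in>{1..J}. fmom_finite p j" and k: "1 \<le> k" "k < J"
  shows "- real (J choose k) / fact J * (fmom p J / real J)
    \<le> (\<Sum>i<J-k. (-1) ^ i / (fact k * fact i) * (fmom p (k + i) / real (k + i)))"
proof -
  note ic = fmom_finite_choose_upto[OF fin]
  have "measure_pmf.expectation p (\<lambda>Y. - real (J choose k) / real J * real (Y choose J))
      \<le> measure_pmf.expectation p (\<lambda>Y. \<Sum>i<J-k. (-1) ^ i * real ((k + i) choose k) / real (k + i)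
                                                   * real (Y choose (k + i)))"
    using ic k alternating_choose_lower[OF k]
    by (intro integral_mono Bochner_Integration.integrable_sum integrable_mult_right) auto
  also have "\<dots> = (\<Sum>i<J-k. (-1) ^ i * real ((k + i) choose k) / real (k + i) * (fmom p (k + i) / fact (k + i)))"
    using ic k by (subst Bochner_Integration.integral_sum) (auto simp: expectation_choose mult_ac)
  also have "\<dots> = (\<Sum>i<J-k. (-1) ^ i / (fact k * fact i) * (fmom p (k + i) / real (k + i)))"
  proof (rule sum.cong[OF refl])
    fix i
    have choose: "real ((k + i) choose k) = fact (k + i) / (fact k * fact i)"
      by (subst binomial_fact) auto
    show "(-1) ^ i * real ((k + i) choose k) / real (k + i) * (fmom p (k + i) / fact (k + i))
        = (-1) ^ i / (fact k * fact i) * (fmom p (k + i) / real (k + i))"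
      unfolding choose by (simp add: field_simps)
  qed
  finally show ?thesis using k by (simp add: expectation_choose field_simps)
qed

context immigration_model
begin

(* mu_k >= 0: divide the moment inequality for eps_n by 1 - rho_n and let n -> oo;
   the left-hand side tends to 0 because lam_J = 0. *)
lemma cp_weight_nonneg:
  assumes k: "k \<in> {1..<J}"
  shows "0 \<le> cp_weight J lam k"
proof -
  have k1: "1 \<le> k" "k < J" using k by auto
  define T where "T n = (\<Sum>i<J-k. (-1) ^ i / (fact k * fact i) * eps_ratio (k + i) n)" for n
  have "T \<longlonglongrightarrow> (\<Sum>i<J-k. (-1) ^ i / (fact k * fact i) * lam (k + i))"
    unfolding T_def[abs_def] using k1
    by (intro tendsto_sum tendsto_mult_left eps_ratio_lim) auto
  moreover have "(\<Sum>i<J-k. (-1) ^ i / (fact k * fact i) * lam (k + i)) = cp_weight J lam k"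
  proof -
    have "{0..J-k-1} = {..<J-k}" using k1 by auto
    then show ?thesis unfolding cp_weight_def sum_distrib_left
      by (intro sum.cong) (simp_all add: field_simps)
  qed
  ultimately have T_lim: "T \<longlonglongrightarrow> cp_weight J lam k" by simp
  have lower_lim: "(\<lambda>n. - real (J choose k) / fact J * eps_ratio J n) \<longlonglongrightarrow> 0"
    using eps_ratio_lim[of J] lam_J J by (intro tendsto_mult_right_zero) auto
  have "- real (J choose k) / fact J * eps_ratio J n \<le> T n" if n: "n \<ge> 1" for n
  proof -
    have r: "0 < 1 - \<rho> n" using rho_lt n by simp
    have ratio: "fmom (eps n) j / real j = (1 - \<rho> n) * eps_ratio j n" for j
      using r unfolding eps_ratio_def by (cases "j = 0") (simp_all add: field_simps)
    have "(1 - \<rho> n) * (- real (J choose k) / fact J * eps_ratio J n) \<le> (1 - \<rho> n) * T n"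
      using fmom_alternating_lower[of J "eps n" k] eps_fin n k1
      unfolding ratio T_def by (simp add: sum_distrib_left ac_simps)
    then show ?thesis by (rule mult_left_le_imp_le) (use r in simp)
  qed
  then show ?thesis
    by (intro LIMSEQ_le[OF lower_lim T_lim]) (auto intro: exI[of _ 1])
qed

end

section \<open>Continuity theorem: convergence of pgfs on [0,1] implies weak convergence\<close>

lemma expectation_sums:
  fixes p :: "nat pmf" and f :: "nat \<Rightarrow> real"
  assumes bd: "\<And>k. \<bar>f k\<bar> \<le> B"
  shows "(\<lambda>k. pmf p k * f k) sums measure_pmf.expectation p f"
proof -
  have "integrable (measure_pmf p) f" by (rule integrable_bounded_pmf[OF bd])
  then have "integrable (count_space UNIV) (\<lambda>k. pmf p k * f k)"
    unfolding measure_pmf_eq_density by (subst (asm) integrable_density) (auto simp: pmf_nonneg)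
  moreover have "measure_pmf.expectation p f = integral\<^sup>L (count_space UNIV) (\<lambda>k. pmf p k * f k)"
    unfolding measure_pmf_eq_density by (subst integral_density) (auto simp: pmf_nonneg)
  ultimately show ?thesis using sums_integral_count_space_nat by simp
qed

lemma pgf_suminf:
  assumes "0 \<le> x" "x \<le> 1"
  shows "(\<Sum>k. pmf p k * x ^ k) = pgf p x"
  unfolding pgf_def
  by (rule sums_unique[symmetric], rule expectation_sums[where B=1])
     (use assms in \<open>auto simp: power_le_one\<close>)

lemma pgf_truncation:
  fixes p :: "nat pmf"
  assumes x: "0 \<le> x" "x \<le> 1"
  shows "0 \<le> pgf p x - (\<Sum>i\<le>k. pmf p i * x ^ i)"
    and "pgf p x - (\<Sum>i\<le>k. pmf p i * x ^ i) \<le> x ^ Suc k"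
proof -
  let ?f = "\<lambda>i. x ^ i * (if i \<le> k then 1 else 0)"
  let ?g = "\<lambda>i. x ^ i * (if i \<le> k then 0 else 1)"
  have bd: "\<bar>?f i\<bar> \<le> 1" "\<bar>?g i\<bar> \<le> 1" for i using x by (auto simp: power_le_one)
  have "pgf p x = measure_pmf.expectation p (\<lambda>i. ?f i + ?g i)"
    unfolding pgf_def by (intro Bochner_Integration.integral_cong) auto
  also have "\<dots> = measure_pmf.expectation p ?f + measure_pmf.expectation p ?g"
    by (rule Bochner_Integration.integral_add) (rule integrable_bounded_pmf, rule bd)+
  also have "measure_pmf.expectation p ?f = (\<Sum>i\<in>{..k}. ?f i * pmf p i)"
    by (rule integral_measure_pmf_real) (auto split: if_splits)
  also have "\<dots> = (\<Sum>i\<le>k. pmf p i * x ^ i)"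
    by (simp add: mult.commute)
  finally have rem: "pgf p x - (\<Sum>i\<le>k. pmf p i * x ^ i) = measure_pmf.expectation p ?g"
    by simp
  show "0 \<le> pgf p x - (\<Sum>i\<le>k. pmf p i * x ^ i)"
    unfolding rem using x by (intro integral_nonneg_AE) auto
  have "measure_pmf.expectation p ?g \<le> measure_pmf.expectation p (\<lambda>_. x ^ Suc k)"
  proof (rule integral_mono)
    show "integrable (measure_pmf p) ?g" by (rule integrable_bounded_pmf, rule bd)
    show "?g i \<le> x ^ Suc k" for i
      using x power_decreasing[of "Suc k" i x] by auto
  qed simp
  then show "pgf p x - (\<Sum>i\<le>k. pmf p i * x ^ i) \<le> x ^ Suc k"
    unfolding rem by simp
qed

lemma pmf_diff_le_pgf:
  fixes p q :: "nat pmf"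
  assumes x: "0 < x" "x \<le> 1"
  shows "\<bar>pmf p k - pmf q k\<bar>
    \<le> (\<bar>pgf p x - pgf q x\<bar> + \<bar>(\<Sum>i<k. pmf p i * x ^ i) - (\<Sum>i<k. pmf q i * x ^ i)\<bar>) / x ^ k + x"
proof -
  let ?s = "\<lambda>p. \<Sum>i<k. pmf p i * x ^ i"
  define r where "r p = pgf p x - (\<Sum>i\<le>k. pmf p i * x ^ i)" for p
  have r: "0 \<le> r p" "r p \<le> x ^ Suc k" for p
    unfolding r_def using pgf_truncation[of x p k] x by auto
  have "\<bar>pmf p k - pmf q k\<bar> * x ^ k = \<bar>(pmf p k - pmf q k) * x ^ k\<bar>"
    using x by (simp add: abs_mult)
  also have "(pmf p k - pmf q k) * x ^ k = (pgf p x - pgf q x) - (?s p - ?s q) - (r p - r q)"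
    unfolding r_def by (simp add: lessThan_Suc_atMost[symmetric] algebra_simps)
  also have "\<bar>\<dots>\<bar> \<le> \<bar>pgf p x - pgf q x\<bar> + \<bar>?s p - ?s q\<bar> + x ^ k * x"
    using r[of p] r[of q] by (simp add: mult.commute)
  finally have "(\<bar>pmf p k - pmf q k\<bar> - x) * x ^ k \<le> \<bar>pgf p x - pgf q x\<bar> + \<bar>?s p - ?s q\<bar>"
    by (simp add: algebra_simps)
  then have "\<bar>pmf p k - pmf q k\<bar> - x \<le> (\<bar>pgf p x - pgf q x\<bar> + \<bar>?s p - ?s q\<bar>) / x ^ k"
    using x by (simp add: pos_le_divide_eq)
  then show ?thesis by simp
qed

lemma pmf_conv_from_pgf:
  fixes P :: "nat \<Rightarrow> nat pmf" and q :: "nat pmf"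
  assumes conv: "\<And>x. 0 \<le> x \<Longrightarrow> x \<le> 1 \<Longrightarrow> (\<lambda>n. pgf (P n) x) \<longlonglongrightarrow> pgf q x"
  shows "(\<lambda>n. pmf (P n) k) \<longlonglongrightarrow> pmf q k"
proof (induction k rule: less_induct)
  case (less k)
  show ?case
  proof (rule LIMSEQ_I)
    fix e :: real assume e: "0 < e"
    define x where "x = min (e / 2) (1 / 2)"
    have x: "0 < x" "x \<le> 1" "x \<le> e / 2" using e by (auto simp: x_def)
    let ?s = "\<lambda>p. \<Sum>i<k. pmf p i * x ^ i"
    define err where "err n = (\<bar>pgf (P n) x - pgf q x\<bar> + \<bar>?s (P n) - ?s q\<bar>) / x ^ k" for n
    have "(\<lambda>n. ?s (P n)) \<longlonglongrightarrow> ?s q"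
      using less by (intro tendsto_sum tendsto_mult_right) auto
    then have "err \<longlonglongrightarrow> (0 + 0) / x ^ k"
      unfolding err_def using conv[of x] x
      by (intro tendsto_divide tendsto_add tendsto_rabs_zero LIM_zero) auto
    then obtain N where N: "\<And>n. n \<ge> N \<Longrightarrow> err n < e / 2"
      using LIMSEQ_D[of err 0 "e/2"] e by fastforce
    have "\<bar>pmf (P n) k - pmf q k\<bar> < e" if "n \<ge> N" for n
      using pmf_diff_le_pgf[OF x(1,2), where p="P n" and q=q and k=k] N[OF that] x unfolding err_def by linarith
    then show "\<exists>no. \<forall>n\<ge>no. norm (pmf (P n) k - pmf q k) < e" by auto
  qed
qed

lemma weak_conv_from_pmf:
  fixes P :: "nat \<Rightarrow> nat pmf" and q :: "nat pmf"
  assumes "\<And>k. (\<lambda>n. pmf (P n) k) \<longlonglongrightarrow> pmf q k"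
  shows "weak_conv_m (\<lambda>n. measure_pmf (map_pmf real (P n))) (measure_pmf (map_pmf real q))"
  unfolding weak_conv_m_def weak_conv_def
proof (intro allI impI)
  fix y :: real
  let ?A = "{i::nat. real i \<le> y}"
  have fin: "finite ?A"
  proof (rule finite_subset[of _ "{..nat \<lceil>y\<rceil>}"])
    show "?A \<subseteq> {..nat \<lceil>y\<rceil>}"
    proof
      fix i assume "i \<in> ?A"
      then have "int i \<le> \<lceil>y\<rceil>" by (simp add: le_ceiling_iff)
      then show "i \<in> {..nat \<lceil>y\<rceil>}" by simp
    qed
  qed simp
  have cdf: "cdf (measure_pmf (map_pmf real p)) y = (\<Sum>i\<in>?A. pmf p i)" for p :: "nat pmf"
    unfolding cdf_def2 measure_map_pmf using fin
    by (subst measure_measure_pmf_finite[symmetric]) (auto intro: arg_cong[where f="measure _"])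
  show "(\<lambda>n. cdf (measure_pmf (map_pmf real (P n))) y) \<longlonglongrightarrow> cdf (measure_pmf (map_pmf real q)) y"
    unfolding cdf using assms by (intro tendsto_sum) auto
qed

section \<open>The compound Poisson law as a sum of independent scaled Poisson variables\<close>

definition scaled_poisson :: "(nat \<Rightarrow> real) \<Rightarrow> nat \<Rightarrow> nat pmf" where
  "scaled_poisson \<mu> j =
     (if 0 < \<mu> j then map_pmf (\<lambda>n. j * n) (poisson_pmf (\<mu> j)) else return_pmf 0)"

primrec compound_poisson :: "(nat \<Rightarrow> real) \<Rightarrow> nat \<Rightarrow> nat pmf" where
  "compound_poisson \<mu> 0 = return_pmf 0"
| "compound_poisson \<mu> (Suc N) =
     bind_pmf (compound_poisson \<mu> N) (\<lambda>s. map_pmf (\<lambda>e. s + e) (scaled_poisson \<mu> (Suc N)))"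

lemma pgf_poisson:
  assumes r: "0 < r" and y: "0 \<le> y" "y \<le> 1"
  shows "pgf (poisson_pmf r) y = exp (r * (y - 1))"
proof -
  have "(\<lambda>n. exp (- r) * ((r * y) ^ n / fact n)) sums (exp (- r) * exp (r * y))"
    using exp_converges[of "r * y"] by (intro sums_mult) (simp add: divide_inverse_commute)
  moreover have "(\<lambda>k. pmf (poisson_pmf r) k * y ^ k) = (\<lambda>n. exp (- r) * ((r * y) ^ n / fact n))"
    using r by (simp add: power_mult_distrib fun_eq_iff)
  ultimately have "(\<Sum>k. pmf (poisson_pmf r) k * y ^ k) = exp (- r) * exp (r * y)"
    by (simp add: sums_unique[symmetric])
  moreover have "exp (- r) * exp (r * y) = exp (r * (y - 1))"
    unfolding mult_exp_exp by (simp add: algebra_simps)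
  ultimately show ?thesis using pgf_suminf[OF y, of "poisson_pmf r"] by simp
qed

lemma pgf_scaled_poisson:
  assumes mu: "0 \<le> \<mu> j" and x: "0 \<le> x" "x \<le> 1"
  shows "pgf (scaled_poisson \<mu> j) x = exp (\<mu> j * (x ^ j - 1))"
proof (cases "0 < \<mu> j")
  case True
  have "pgf (scaled_poisson \<mu> j) x = pgf (poisson_pmf (\<mu> j)) (x ^ j)"
    using True unfolding scaled_poisson_def pgf_def by (simp add: power_mult)
  also have "\<dots> = exp (\<mu> j * (x ^ j - 1))"
    using True x by (intro pgf_poisson) (auto simp: power_le_one)
  finally show ?thesis .
next
  case False
  then show ?thesis using mu unfolding scaled_poisson_def by simp
qed

lemma pgf_compound_poisson:
  assumes mu: "\<forall>j\<in>{1..N}. 0 \<le> \<mu> j" and x: "0 \<le> x" "x \<le> 1"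
  shows "pgf (compound_poisson \<mu> N) x = exp (\<Sum>j=1..N. \<mu> j * (x ^ j - 1))"
  using mu
proof (induction N)
  case (Suc N)
  then show ?case
    by (simp add: pgf_bind_shift[OF x] pgf_scaled_poisson[OF _ x] exp_add[symmetric])
qed simp

lemma compound_poisson_is_CP:
  assumes "\<forall>j\<in>{1..N}. 0 \<le> \<mu> j"
  shows "is_CP (compound_poisson \<mu> N) \<mu> N"
  unfolding is_CP_def using pgf_compound_poisson[OF assms] pgf_suminf by auto

theorem theorem3:
  fixes xi eps :: "nat \<Rightarrow> nat pmf" and J :: nat and lam \<mu> :: "nat \<Rightarrow> real"
  assumes J: "J \<ge> 2"
    and xi_fin: "\<forall>n\<ge>1. fmom_finite (xi n) 1 \<and> fmom_finite (xi n) 2"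
    and eps_fin: "\<forall>n\<ge>1. \<forall>k\<in>{1..J}. fmom_finite (eps n) k"
    and rho_lt: "\<forall>n\<ge>1. fmom (xi n) 1 < 1"
    and rho_lim: "(\<lambda>n. fmom (xi n) 1) \<longlonglongrightarrow> 1"
    and rho_div: "filterlim (\<lambda>N. \<Sum>n=1..N. 1 - fmom (xi n) 1) at_top sequentially"
    and G2_lim: "(\<lambda>n. fmom (xi n) 2 / (1 - fmom (xi n) 1)) \<longlonglongrightarrow> 0"
    and lam_lim: "\<forall>j\<in>{1..J}. (\<lambda>n. fmom (eps n) j / (real j * (1 - fmom (xi n) 1)))
                      \<longlonglongrightarrow> lam j"
    and lam_J: "lam J = 0"
    and mu_def: "\<forall>j\<in>{1..<J}. \<mu> j =
        1 / fact j * (\<Sum>i=0..J-j-1. (-1) ^ i / fact i * lam (j + i))"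
  shows "(\<forall>j\<in>{1..<J}. \<mu> j \<ge> 0) \<and>
         (\<exists>q. is_CP q \<mu> (J - 1) \<and>
              weak_conv_m (\<lambda>n. measure_pmf (map_pmf real (X_law xi eps n)))
                          (measure_pmf (map_pmf real q)))"
proof -
  interpret immigration_model xi eps J lam
    using assms by unfold_locales auto
  have mu_eq: "\<And>j. j \<in> {1..J-1} \<Longrightarrow> \<mu> j = cp_weight J lam j"
    using mu_def J unfolding cp_weight_def by auto
  have mu_nonneg: "\<forall>j\<in>{1..J-1}. 0 \<le> \<mu> j"
    using mu_eq cp_weight_nonneg J by auto
  define q where "q = compound_poisson \<mu> (J - 1)"
  have "(\<lambda>n. pgf (X_law xi eps n) x) \<longlonglongrightarrow> pgf q x" if x: "0 \<le> x" "x \<le> 1" for x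
  proof -
    have "limit_exponent x = (\<Sum>j=1..J-1. \<mu> j * (x ^ j - 1))"
      unfolding limit_exponent_def cp_weight_exponent by (simp add: mu_eq)
    then show ?thesis
      using pgf_X_law_lim[of x] pgf_compound_poisson[OF mu_nonneg x] x unfolding q_def by simp
  qed
  then have "weak_conv_m (\<lambda>n. measure_pmf (map_pmf real (X_law xi eps n))) (measure_pmf (map_pmf real q))"
    by (intro weak_conv_from_pmf pmf_conv_from_pgf)
  moreover have "is_CP q \<mu> (J - 1)"
    unfolding q_def by (rule compound_poisson_is_CP[OF mu_nonneg])
  ultimately show ?thesis using mu_nonneg J by auto
qed
end
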